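(* For every set of formulas $\Gamma$ and every formula $\varphi$: if $\Gamma\vdash_{\mathsf{iSLH}}\varphi$, then there is a finite multiset $\Gamma'$ whose elements all belong to $\Gamma$ such that the sequent $\Gamma'\Rightarrow\varphi$ is provable in $\mathsf{G4iSLt}$.
   Context: Formulas are built by the grammar $\varphi ::= p \mid \bot \mid \varphi\land\varphi \mid \varphi\lor\varphi \mid \varphi\to\varphi \mid \Box\varphi$, with $p$ ranging over a countably infinite set of propositional variables. For a multiset $\Gamma$, $\Box\Gamma=\{\Box\psi:\psi\in\Gamma\}$; a boxed formula is one of the form $\Box\psi$. The generalised Hilbert calculus $\mathsf{iSLH}$ derives expressions $\Gamma\vdash\varphi$ ($\Gamma$ a set of formulas) by the rules: (Ax) $\Gamma\vdash\varphi$ whenever $\varphi$ is an instance of an axiom; (El) $\Gamma\vdash\varphi$ whenever $\varphi\in\Gamma$; (Nec) from $\emptyset\vdash\varphi$ infer $\Gamma\vdash\Box\varphi$; (MP) from $\Gamma\vdash\varphi$ and $\Gamma\vdash\varphi\to\psi$ infer $\Gamma\vdash\psi$. The axioms are all instances of: $\varphi\to(\psi\to\varphi)$; $(\varphi\to(\psi\to\chi))\to((\varphi\to\psi)\to(\varphi\to\chi))$; $\varphi\to(\varphi\lor\psi)$; $\psi\to(\varphi\lor\psi)$; $(\varphi\to\chi)\to((\psi\to\chi)\to((\varphi\lor\psi)\to\chi))$; $(\varphi\land\psi)\to\varphi$; $(\varphi\land\psi)\to\psi$; $(\varphi\to\psi)\to((\varphi\to\chi)\to(\varphi\to(\psi\land\chi)))$;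 $\bot\to\varphi$; $\Box(\varphi\to\psi)\to(\Box\varphi\to\Box\psi)$; $(\Box\varphi\to\varphi)\to\varphi$. A sequent is $\Gamma\Rightarrow\chi$ with $\Gamma$ a finite multiset of formulas and $\chi$ a formula. The sequent calculus $\mathsf{G4iSLt}$ has the following rules, where $p$ is a propositional variable and $\Phi$ always denotes a multiset containing no boxed formula: (⊥L) $\bot,\Gamma\Rightarrow\chi$ (no premise); (IdP) $\Gamma,p\Rightarrow p$ (no premise); (∧L) from $\Gamma,\varphi,\psi\Rightarrow\chi$ infer $\Gamma,\varphi\land\psi\Rightarrow\chi$; (∧R) from $\Gamma\Rightarrow\varphi$ and $\Gamma\Rightarrow\psi$ infer $\Gamma\Rightarrow\varphi\land\psi$; (∨L) from $\Gamma,\varphi\Rightarrow\chi$ and $\Gamma,\psi\Rightarrow\chi$ infer $\Gamma,\varphi\lor\psi\Rightarrow\chi$; (∨R$_i$), $i\in\{1,2\}$: from $\Gamma\Rightarrow\varphi_i$ infer $\Gamma\Rightarrow\varphi_1\lor\varphi_2$; (p→L) from $\Gamma,p,\varphi\Rightarrow\chi$ infer $\Gamma,p,p\to\varphi\Rightarrow\chi$; (→R) from $\Gamma,\varphi\Rightarrow\psi$ infer $\Gamma\Rightarrow\varphi\to\psi$; (□→L) from $\Phi,\Gamma,\psi,\Box\varphi\Rightarrow\varphi$ and $\Phi,\Box\Gamma,\psi\Rightarrow\chi$ infer $\Phi,\Box\Gamma,\Box\varphi\to\psi\Rightarrow\chi$; (SLtR) from $\Phi,\Gamma,\Box\varphi\Rightarrow\varphi$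 infer $\Phi,\Box\Gamma\Rightarrow\Box\varphi$; (∧→L) from $\Gamma,\varphi\to(\psi\to\chi)\Rightarrow\delta$ infer $\Gamma,(\varphi\land\psi)\to\chi\Rightarrow\delta$; (∨→L) from $\Gamma,\varphi\to\chi,\psi\to\chi\Rightarrow\delta$ infer $\Gamma,(\varphi\lor\psi)\to\chi\Rightarrow\delta$; (→→L) from $\Gamma,\psi\to\chi\Rightarrow\varphi\to\psi$ and $\Gamma,\chi\Rightarrow\delta$ infer $\Gamma,(\varphi\to\psi)\to\chi\Rightarrow\delta$. A proof of a sequent $S$ is a finite tree of sequents with root $S$ in which each interior node together with its children forms an instance of a rule (conclusion, premises) and each leaf is the conclusion of a premise-free rule; $S$ is provable if it has a proof. *)

theory Defs
  imports Main "HOL-Library.Multiset"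
begin

datatype form =
    Var nat
  | Bot
  | And form form
  | Or form form
  | Imp form form
  | Box form

definition is_box :: "form \<Rightarrow> bool" where
  "is_box f \<longleftrightarrow> (\<exists>g. f = Box g)"

definition boxfree :: "form multiset \<Rightarrow> bool" where
  "boxfree \<Phi> \<longleftrightarrow> (\<forall>f\<in>#\<Phi>. \<not> is_box f)"

definition box_ms :: "form multiset \<Rightarrow> form multiset" where
  "box_ms \<Gamma> = image_mset Box \<Gamma>"

inductive axiom :: "form \<Rightarrow> bool" where
  A1: "axiom (Imp \<phi> (Imp \<psi> \<phi>))"
| A2: "axiom (Imp (Imp \<phi> (Imp \<psi> \<chi>)) (Imp (Imp \<phi> \<psi>) (Imp \<phi> \<chi>)))"
| A3: "axiom (Imp \<phi> (Or \<phi> \<psi>))"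
| A4: "axiom (Imp \<psi> (Or \<phi> \<psi>))"
| A5: "axiom (Imp (Imp \<phi> \<chi>) (Imp (Imp \<psi> \<chi>) (Imp (Or \<phi> \<psi>) \<chi>)))"
| A6: "axiom (Imp (And \<phi> \<psi>) \<phi>)"
| A7: "axiom (Imp (And \<phi> \<psi>) \<psi>)"
| A8: "axiom (Imp (Imp \<phi> \<psi>) (Imp (Imp \<phi> \<chi>) (Imp \<phi> (And \<psi> \<chi>))))"
| A9: "axiom (Imp Bot \<phi>)"
| AK: "axiom (Imp (Box (Imp \<phi> \<psi>)) (Imp (Box \<phi>) (Box \<psi>)))"
| AGL: "axiom (Imp (Imp (Box \<phi>) \<phi>) \<phi>)"

inductive iSLH :: "form set \<Rightarrow> form \<Rightarrow> bool" where
  Ax: "axiom \<phi> \<Longrightarrow> iSLH \<Gamma> \<phi>"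
| El: "\<phi> \<in> \<Gamma> \<Longrightarrow> iSLH \<Gamma> \<phi>"
| Nec: "iSLH {} \<phi> \<Longrightarrow> iSLH \<Gamma> (Box \<phi>)"
| MP: "iSLH \<Gamma> \<phi> \<Longrightarrow> iSLH \<Gamma> (Imp \<phi> \<psi>) \<Longrightarrow> iSLH \<Gamma> \<psi>"

inductive G4iSLt :: "form multiset \<Rightarrow> form \<Rightarrow> bool" where
  BotL: "G4iSLt (add_mset Bot \<Gamma>) \<chi>"
| IdP: "G4iSLt (add_mset (Var p) \<Gamma>) (Var p)"
| AndL: "G4iSLt (add_mset \<phi> (add_mset \<psi> \<Gamma>)) \<chi> \<Longrightarrow> G4iSLt (add_mset (And \<phi> \<psi>) \<Gamma>) \<chi>"
| AndR: "G4iSLt \<Gamma> \<phi> \<Longrightarrow> G4iSLt \<Gamma> \<psi> \<Longrightarrow> G4iSLt \<Gamma> (And \<phi> \<psi>)"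
| OrL: "G4iSLt (add_mset \<phi> \<Gamma>) \<chi> \<Longrightarrow> G4iSLt (add_mset \<psi> \<Gamma>) \<chi>
         \<Longrightarrow> G4iSLt (add_mset (Or \<phi> \<psi>) \<Gamma>) \<chi>"
| OrR1: "G4iSLt \<Gamma> \<phi> \<Longrightarrow> G4iSLt \<Gamma> (Or \<phi> \<psi>)"
| OrR2: "G4iSLt \<Gamma> \<psi> \<Longrightarrow> G4iSLt \<Gamma> (Or \<phi> \<psi>)"
| VarImpL: "G4iSLt (add_mset (Var p) (add_mset \<phi> \<Gamma>)) \<chi>
         \<Longrightarrow> G4iSLt (add_mset (Var p) (add_mset (Imp (Var p) \<phi>) \<Gamma>)) \<chi>"
| ImpR: "G4iSLt (add_mset \<phi> \<Gamma>) \<psi> \<Longrightarrow> G4iSLt \<Gamma> (Imp \<phi> \<psi>)"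
| BoxImpL: "boxfree \<Phi> \<Longrightarrow>
         G4iSLt (\<Phi> + \<Gamma> + {#\<psi>, Box \<phi>#}) \<phi> \<Longrightarrow>
         G4iSLt (\<Phi> + box_ms \<Gamma> + {#\<psi>#}) \<chi> \<Longrightarrow>
         G4iSLt (\<Phi> + box_ms \<Gamma> + {#Imp (Box \<phi>) \<psi>#}) \<chi>"
| SLtR: "boxfree \<Phi> \<Longrightarrow>
         G4iSLt (\<Phi> + \<Gamma> + {#Box \<phi>#}) \<phi> \<Longrightarrow>
         G4iSLt (\<Phi> + box_ms \<Gamma>) (Box \<phi>)"
| AndImpL: "G4iSLt (add_mset (Imp \<phi> (Imp \<psi> \<chi>)) \<Gamma>) \<delta>
         \<Longrightarrow> G4iSLt (add_mset (Imp (And \<phi> \<psi>) \<chi>) \<Gamma>) \<delta>"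
| OrImpL: "G4iSLt (add_mset (Imp \<phi> \<chi>) (add_mset (Imp \<psi> \<chi>) \<Gamma>)) \<delta>
         \<Longrightarrow> G4iSLt (add_mset (Imp (Or \<phi> \<psi>) \<chi>) \<Gamma>) \<delta>"
| ImpImpL: "G4iSLt (add_mset (Imp \<psi> \<chi>) \<Gamma>) (Imp \<phi> \<psi>) \<Longrightarrow>
         G4iSLt (add_mset \<chi> \<Gamma>) \<delta> \<Longrightarrow>
         G4iSLt (add_mset (Imp (Imp \<phi> \<psi>) \<chi>) \<Gamma>) \<delta>"

end

theory Submission
  imports Defs
begin

text \<open>
  Derivations in iSLH are sound for intuitionistic Kripke models whose modal relation R satisfies
  R \<subseteq> \<le>, \<le>;R \<subseteq> R and is conversely well-founded, and they use only finitely many hypotheses.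
  It therefore suffices that every sequent is either provable in G4iSLt or refuted in such a
  model. This follows by well-founded induction along backward proof search: the invertible
  rules transfer provability and refutations between conclusion and premises, and when none
  applies, countermodels of the premises of the non-invertible rules are glued below a fresh
  root, which refutes the sequent. Search terminates because each premise either has smaller
  weight or has fewer boxed subformulas outside the closure of its antecedent under trivial
  derivations; closure members are provable because weakening, identity, modus ponens on the
  left and the inversions of the left rules are admissible.
\<close>

section \<open>Boxed formulas in antecedents\<close>

fun unbox :: "form \<Rightarrow> form" where
  "unbox (Box g) = g"
| "unbox f = f"

lemma is_box_simps [simp]:
  "is_box (Box g)" "\<not> is_box (Var p)" "\<not> is_box Bot"
  "\<not> is_box (And a b)" "\<not> is_box (Or a b)" "\<not> is_box (Imp a b)"
  by (auto simp: is_box_def)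

lemma unbox_nonbox: "\<not> is_box f \<Longrightarrow> unbox f = f"
  by (cases f) auto

lemma box_ms_simps [simp]:
  "box_ms {#} = {#}"
  "box_ms (add_mset g G) = add_mset (Box g) (box_ms G)"
  "box_ms (G + H) = box_ms G + box_ms H"
  by (auto simp: box_ms_def)

lemma boxfree_simps [simp]:
  "boxfree {#}"
  "boxfree (add_mset f S) \<longleftrightarrow> \<not> is_box f \<and> boxfree S"
  "boxfree (S + T) \<longleftrightarrow> boxfree S \<and> boxfree T"
  by (auto simp: boxfree_def)

lemma image_unbox_boxfree [simp]: "boxfree \<Phi> \<Longrightarrow> image_mset unbox \<Phi> = \<Phi>"
  by (induction \<Phi>) (auto simp: unbox_nonbox)

lemma image_unbox_box_ms [simp]: "image_mset unbox (box_ms \<Gamma>) = \<Gamma>"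
  by (induction \<Gamma>) auto

lemma boxfree_box_ms_decomp:
  obtains \<Phi> \<Gamma> where "boxfree \<Phi>" "S = \<Phi> + box_ms \<Gamma>"
proof
  let ?\<Gamma> = "image_mset unbox (filter_mset is_box S)"
  show "boxfree (filter_mset (\<lambda>f. \<not> is_box f) S)"
    by (simp add: boxfree_def)
  have "box_ms ?\<Gamma> = filter_mset is_box S"
    by (induction S) (auto simp: is_box_def)
  then show "S = filter_mset (\<lambda>f. \<not> is_box f) S + box_ms ?\<Gamma>"
    by (metis multiset_partition add.commute)
qed

lemma boxfree_diff [simp]: "boxfree \<Phi> \<Longrightarrow> boxfree (\<Phi> - \<Psi>)"
  by (auto simp: boxfree_def dest: in_diffD)

lemma box_notin_boxfree [simp]: "boxfree \<Phi> \<Longrightarrow> Box b \<notin># \<Phi>"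
  by (auto simp: boxfree_def)

lemma box_in_box_ms_iff [simp]: "Box b \<in># box_ms \<Gamma> \<longleftrightarrow> b \<in># \<Gamma>"
  by (auto simp: box_ms_def)

lemma SLtR_unboxed:
  "G4iSLt (add_mset (Box \<phi>) (image_mset unbox S)) \<phi> \<Longrightarrow> G4iSLt S (Box \<phi>)"
  by (rule boxfree_box_ms_decomp[of S]) (use G4iSLt.SLtR in force)

lemma BoxImpL_unboxed:
  "G4iSLt (add_mset \<psi> (add_mset (Box \<phi>) (image_mset unbox S))) \<phi> \<Longrightarrow>
   G4iSLt (add_mset \<psi> S) \<chi> \<Longrightarrow> G4iSLt (add_mset (Imp (Box \<phi>) \<psi>) S) \<chi>"
  by (rule boxfree_box_ms_decomp[of S]) (use G4iSLt.BoxImpL in force)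

section \<open>Admissible rules\<close>

lemma weakening: "G4iSLt S C \<Longrightarrow> G4iSLt (add_mset A S) C"
proof (induction arbitrary: A rule: G4iSLt.induct)
  case (BoxImpL \<Phi> \<Gamma> \<psi> \<phi> \<chi>)
  have "G4iSLt (add_mset \<psi> (add_mset (Box \<phi>) (image_mset unbox (add_mset A (\<Phi> + box_ms \<Gamma>))))) \<phi>"
    using BoxImpL.IH(1)[of "unbox A"] BoxImpL.hyps(1) by (simp add: add_mset_commute)
  moreover have "G4iSLt (add_mset \<psi> (add_mset A (\<Phi> + box_ms \<Gamma>))) \<chi>"
    using BoxImpL.IH(2)[of A] by (simp add: add_mset_commute)
  ultimately show ?case
    by (metis BoxImpL_unboxed add_mset_add_single add_mset_commute union_assoc)
next
  case (SLtR \<Phi> \<Gamma> \<phi>)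
  have "G4iSLt (add_mset (Box \<phi>) (image_mset unbox (add_mset A (\<Phi> + box_ms \<Gamma>)))) \<phi>"
    using SLtR.IH[of "unbox A"] SLtR.hyps(1) by (simp add: add_mset_commute)
  then show ?case by (rule SLtR_unboxed)
next
  case BotL
  then show ?case by (metis G4iSLt.BotL add_mset_commute)
next
  case IdP
  then show ?case by (metis G4iSLt.IdP add_mset_commute)
next
  case AndL
  then show ?case by (metis G4iSLt.AndL add_mset_commute)
next
  case AndR
  then show ?case by (blast intro: G4iSLt.AndR)
next
  case OrL
  then show ?case by (metis G4iSLt.OrL add_mset_commute)
next
  case OrR1
  then show ?case by (blast intro: G4iSLt.OrR1)
next
  case OrR2
  then show ?case by (blast intro: G4iSLt.OrR2)
next
  case VarImpL
  then show ?case by (metis G4iSLt.VarImpL add_mset_commute)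
next
  case ImpR
  then show ?case by (metis G4iSLt.ImpR add_mset_commute)
next
  case AndImpL
  then show ?case by (metis G4iSLt.AndImpL add_mset_commute)
next
  case OrImpL
  then show ?case by (metis G4iSLt.OrImpL add_mset_commute)
next
  case ImpImpL
  then show ?case by (metis G4iSLt.ImpImpL add_mset_commute)
qed

lemma weakening_ms: "G4iSLt S C \<Longrightarrow> G4iSLt (S + T) C"
  by (induction T) (auto simp: weakening)

lemma box_ms_diff_single:
  "boxfree \<Phi> \<Longrightarrow> b \<in># \<Gamma> \<Longrightarrow> \<Phi> + box_ms \<Gamma> - {#Box b#} = \<Phi> + box_ms (\<Gamma> - {#b#})"
  by (metis box_ms_simps(2) add_mset_remove_trivial insert_DiffM union_mset_add_mset_right)

lemma unbox_admissible: "G4iSLt S C \<Longrightarrow> Box b \<in># S \<Longrightarrow> G4iSLt (add_mset b (S - {#Box b#})) C"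
proof (induction arbitrary: b rule: G4iSLt.induct)
  case (BotL \<Gamma> \<chi>)
  then show ?case by (simp add: add_mset_commute G4iSLt.BotL)
next
  case (IdP p \<Gamma>)
  then show ?case by (simp add: add_mset_commute) (metis G4iSLt.IdP add_mset_commute)
next
  case (AndL \<phi> \<psi> \<Gamma> \<chi>)
  then have "G4iSLt (add_mset \<phi> (add_mset \<psi> (add_mset b (\<Gamma> - {#Box b#})))) \<chi>"
    using AndL.IH[of b] by (simp add: add_mset_commute)
  from G4iSLt.AndL[OF this] show ?case using AndL.prems by (simp add: add_mset_commute)
next
  case (AndR \<Gamma> \<phi> \<psi>)
  then show ?case by (simp add: G4iSLt.AndR)
next
  case (OrL \<phi> \<Gamma> \<chi> \<psi>)
  then have "G4iSLt (add_mset \<phi> (add_mset b (\<Gamma> - {#Box b#}))) \<chi>"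
    "G4iSLt (add_mset \<psi> (add_mset b (\<Gamma> - {#Box b#}))) \<chi>"
    using OrL.IH[of b] by (simp_all add: add_mset_commute)
  from G4iSLt.OrL[OF this] show ?case using OrL.prems by (simp add: add_mset_commute)
next
  case (OrR1 \<Gamma> \<phi> \<psi>)
  then show ?case by (simp add: G4iSLt.OrR1)
next
  case (OrR2 \<Gamma> \<psi> \<phi>)
  then show ?case by (simp add: G4iSLt.OrR2)
next
  case (VarImpL p \<phi> \<Gamma> \<chi>)
  then have "G4iSLt (add_mset (Var p) (add_mset \<phi> (add_mset b (\<Gamma> - {#Box b#})))) \<chi>"
    using VarImpL.IH[of b] by (simp add: add_mset_commute)
  from G4iSLt.VarImpL[OF this] show ?case using VarImpL.prems by (simp add: add_mset_commute)
next
  case (ImpR \<phi> \<Gamma> \<psi>)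
  then have "G4iSLt (add_mset \<phi> (add_mset b (\<Gamma> - {#Box b#}))) \<psi>"
    using ImpR.IH[of b] by (simp add: add_mset_commute)
  then show ?case by (rule G4iSLt.ImpR)
next
  case (AndImpL \<phi> \<psi> \<chi> \<Gamma> \<delta>)
  then have "G4iSLt (add_mset (Imp \<phi> (Imp \<psi> \<chi>)) (add_mset b (\<Gamma> - {#Box b#}))) \<delta>"
    using AndImpL.IH[of b] by (simp add: add_mset_commute)
  from G4iSLt.AndImpL[OF this] show ?case using AndImpL.prems by (simp add: add_mset_commute)
next
  case (OrImpL \<phi> \<chi> \<psi> \<Gamma> \<delta>)
  then have "G4iSLt (add_mset (Imp \<phi> \<chi>) (add_mset (Imp \<psi> \<chi>) (add_mset b (\<Gamma> - {#Box b#})))) \<delta>"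
    using OrImpL.IH[of b] by (simp add: add_mset_commute)
  from G4iSLt.OrImpL[OF this] show ?case using OrImpL.prems by (simp add: add_mset_commute)
next
  case (ImpImpL \<psi> \<chi> \<Gamma> \<phi> \<delta>)
  then have "G4iSLt (add_mset (Imp \<psi> \<chi>) (add_mset b (\<Gamma> - {#Box b#}))) (Imp \<phi> \<psi>)"
    "G4iSLt (add_mset \<chi> (add_mset b (\<Gamma> - {#Box b#}))) \<delta>"
    using ImpImpL.IH[of b] by (simp_all add: add_mset_commute)
  from G4iSLt.ImpImpL[OF this] show ?case using ImpImpL.prems by (simp add: add_mset_commute)
next
  case (BoxImpL \<Phi> \<Gamma> \<psi> \<phi> \<chi>)
  have b: "b \<in># \<Gamma>" using BoxImpL.prems BoxImpL.hyps(1) by simp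
  let ?T = "\<Phi> + box_ms (\<Gamma> - {#b#})"
  have "G4iSLt (add_mset \<psi> (add_mset (Box \<phi>) (add_mset (unbox b) (\<Phi> + (\<Gamma> - {#b#}))))) \<phi>"
  proof (cases "is_box b")
    case True
    then obtain b' where "b = Box b'" by (auto simp: is_box_def)
    then show ?thesis using BoxImpL.IH(1)[of b'] b by (simp add: add_mset_commute)
  next
    case False
    then show ?thesis using BoxImpL.hyps(2) b by (simp add: unbox_nonbox add_mset_commute)
  qed
  moreover have "G4iSLt (add_mset \<psi> (add_mset b ?T)) \<chi>"
    using BoxImpL.IH(2)[of b] BoxImpL.hyps(1) b by (simp add: box_ms_diff_single add_mset_commute)
  ultimately have "G4iSLt (add_mset (Imp (Box \<phi>) \<psi>) (add_mset b ?T)) \<chi>"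
    using BoxImpL.hyps(1) by (intro BoxImpL_unboxed) (simp_all add: add_mset_commute)
  then show ?case using BoxImpL.hyps(1) b by (simp add: box_ms_diff_single add_mset_commute)
next
  case (SLtR \<Phi> \<Gamma> \<phi>)
  have b: "b \<in># \<Gamma>" using SLtR.prems SLtR.hyps(1) by simp
  have "G4iSLt (add_mset (Box \<phi>) (add_mset (unbox b) (\<Phi> + (\<Gamma> - {#b#})))) \<phi>"
  proof (cases "is_box b")
    case True
    then obtain b' where "b = Box b'" by (auto simp: is_box_def)
    then show ?thesis using SLtR.IH[of b'] b by (simp add: add_mset_commute)
  next
    case False
    then show ?thesis using SLtR.hyps(2) b by (simp add: unbox_nonbox add_mset_commute)
  qed
  then have "G4iSLt (add_mset b (\<Phi> + box_ms (\<Gamma> - {#b#}))) (Box \<phi>)"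
    using SLtR.hyps(1) by (intro SLtR_unboxed) simp
  then show ?case using SLtR.hyps(1) b by (simp add: box_ms_diff_single)
qed

lemma unbox_ms_admissible: "G4iSLt (M + X) C \<Longrightarrow> G4iSLt (image_mset unbox M + X) C"
proof (induction M arbitrary: X)
  case (add f M)
  have "G4iSLt (M + add_mset (unbox f) X) C"
  proof (cases "is_box f")
    case True
    then obtain g where "f = Box g" by (auto simp: is_box_def)
    then show ?thesis using unbox_admissible[OF add.prems, of g] by simp
  next
    case False
    then show ?thesis using add.prems by (simp add: unbox_nonbox)
  qed
  then show ?case using add.IH by fastforce
qed simp

lemma unbox_all_admissible: "G4iSLt S C \<Longrightarrow> G4iSLt (image_mset unbox S) C"
  using unbox_ms_admissible[of S "{#}"] by simp

inductive left_split :: "form \<Rightarrow> form multiset \<Rightarrow> bool" where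
  "left_split (And a b) {#a, b#}"
| "left_split (Or a b) {#a#}"
| "left_split (Or a b) {#b#}"

lemma left_split_shape:
  "left_split F R \<Longrightarrow> \<not> is_box F \<and> F \<noteq> Bot \<and> (\<forall>p. F \<noteq> Var p) \<and> (\<forall>a b. F \<noteq> Imp a b)"
  by (auto elim: left_split.cases)

lemma left_split_admissible:
  assumes F: "left_split F R"
  shows "G4iSLt S C \<Longrightarrow> F \<in># S \<Longrightarrow> G4iSLt (R + (S - {#F#})) C"
proof (induction rule: G4iSLt.induct)
  case (BotL \<Gamma> \<chi>)
  then have "Bot \<in># R + (add_mset Bot \<Gamma> - {#F#})" using left_split_shape[OF F] by simp
  then show ?case by (metis G4iSLt.BotL multi_member_split)
next
  case (IdP p \<Gamma>)
  then have "Var p \<in># R + (add_mset (Var p) \<Gamma> - {#F#})" using left_split_shape[OF F] by simp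
  then show ?case by (metis G4iSLt.IdP multi_member_split)
next
  case (AndL \<phi> \<psi> \<Gamma> \<chi>)
  show ?case
  proof (cases "F = And \<phi> \<psi>")
    case True
    then show ?thesis using F AndL.hyps by (auto elim: left_split.cases simp: add_mset_commute)
  next
    case False
    then have "G4iSLt (add_mset \<phi> (add_mset \<psi> (R + (\<Gamma> - {#F#})))) \<chi>"
      using AndL.IH AndL.prems by (simp add: add_mset_commute)
    from G4iSLt.AndL[OF this] show ?thesis using AndL.prems False by (simp add: add_mset_commute)
  qed
next
  case (AndR \<Gamma> \<phi> \<psi>)
  then show ?case by (simp add: G4iSLt.AndR)
next
  case (OrL \<phi> \<Gamma> \<chi> \<psi>)
  show ?case
  proof (cases "F = Or \<phi> \<psi>")
    case True
    then show ?thesis using F OrL.hyps by (auto elim: left_split.cases)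
  next
    case False
    then have "G4iSLt (add_mset \<phi> (R + (\<Gamma> - {#F#}))) \<chi>" "G4iSLt (add_mset \<psi> (R + (\<Gamma> - {#F#}))) \<chi>"
      using OrL.IH OrL.prems by (simp_all add: add_mset_commute)
    from G4iSLt.OrL[OF this] show ?thesis using OrL.prems False by (simp add: add_mset_commute)
  qed
next
  case (OrR1 \<Gamma> \<phi> \<psi>)
  then show ?case by (simp add: G4iSLt.OrR1)
next
  case (OrR2 \<Gamma> \<psi> \<phi>)
  then show ?case by (simp add: G4iSLt.OrR2)
next
  case (VarImpL p \<phi> \<Gamma> \<chi>)
  have "F \<noteq> Var p" "F \<noteq> Imp (Var p) \<phi>" using left_split_shape[OF F] by auto
  then have "G4iSLt (add_mset (Var p) (add_mset \<phi> (R + (\<Gamma> - {#F#})))) \<chi>"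
    using VarImpL.IH VarImpL.prems by (simp add: add_mset_commute)
  from G4iSLt.VarImpL[OF this] show ?case
    using VarImpL.prems \<open>F \<noteq> Var p\<close> \<open>F \<noteq> Imp (Var p) \<phi>\<close> by (simp add: add_mset_commute)
next
  case (ImpR \<phi> \<Gamma> \<psi>)
  then have "G4iSLt (add_mset \<phi> (R + (\<Gamma> - {#F#}))) \<psi>" by (simp add: add_mset_commute)
  then show ?case by (rule G4iSLt.ImpR)
next
  case (AndImpL \<phi> \<psi> \<chi> \<Gamma> \<delta>)
  have "F \<noteq> Imp (And \<phi> \<psi>) \<chi>" using left_split_shape[OF F] by auto
  then have "G4iSLt (add_mset (Imp \<phi> (Imp \<psi> \<chi>)) (R + (\<Gamma> - {#F#}))) \<delta>"
    using AndImpL.IH AndImpL.prems by (simp add: add_mset_commute)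
  from G4iSLt.AndImpL[OF this] show ?case
    using AndImpL.prems \<open>F \<noteq> Imp (And \<phi> \<psi>) \<chi>\<close> by (simp add: add_mset_commute)
next
  case (OrImpL \<phi> \<chi> \<psi> \<Gamma> \<delta>)
  have "F \<noteq> Imp (Or \<phi> \<psi>) \<chi>" using left_split_shape[OF F] by auto
  then have "G4iSLt (add_mset (Imp \<phi> \<chi>) (add_mset (Imp \<psi> \<chi>) (R + (\<Gamma> - {#F#})))) \<delta>"
    using OrImpL.IH OrImpL.prems by (simp add: add_mset_commute)
  from G4iSLt.OrImpL[OF this] show ?case
    using OrImpL.prems \<open>F \<noteq> Imp (Or \<phi> \<psi>) \<chi>\<close> by (simp add: add_mset_commute)
next
  case (ImpImpL \<psi> \<chi> \<Gamma> \<phi> \<delta>)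
  have "F \<noteq> Imp (Imp \<phi> \<psi>) \<chi>" using left_split_shape[OF F] by auto
  then have "G4iSLt (add_mset (Imp \<psi> \<chi>) (R + (\<Gamma> - {#F#}))) (Imp \<phi> \<psi>)"
    "G4iSLt (add_mset \<chi> (R + (\<Gamma> - {#F#}))) \<delta>"
    using ImpImpL.IH ImpImpL.prems by (simp_all add: add_mset_commute)
  from G4iSLt.ImpImpL[OF this] show ?case
    using ImpImpL.prems \<open>F \<noteq> Imp (Imp \<phi> \<psi>) \<chi>\<close> by (simp add: add_mset_commute)
next
  case (BoxImpL \<Phi> \<Gamma> \<psi> \<phi> \<chi>)
  have "F \<noteq> Imp (Box \<phi>) \<psi>" "\<not> is_box F" using left_split_shape[OF F] by auto
  then have "F \<in># \<Phi>" using BoxImpL.prems by (auto simp: box_ms_def)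
  let ?T = "R + (\<Phi> - {#F#}) + box_ms \<Gamma>"
  have "G4iSLt (R + add_mset \<psi> (add_mset (Box \<phi>) ((\<Phi> - {#F#}) + \<Gamma>))) \<phi>"
    using BoxImpL.IH(1) \<open>F \<in># \<Phi>\<close> by simp
  from unbox_ms_admissible[OF this] have "G4iSLt (add_mset \<psi> (add_mset (Box \<phi>) (image_mset unbox ?T))) \<phi>"
    using BoxImpL.hyps(1) by (simp add: add.assoc)
  moreover have "G4iSLt (add_mset \<psi> ?T) \<chi>"
    using BoxImpL.IH(2) \<open>F \<in># \<Phi>\<close> by (simp add: ac_simps)
  ultimately have "G4iSLt (add_mset (Imp (Box \<phi>) \<psi>) ?T) \<chi>" by (rule BoxImpL_unboxed)
  then show ?case using \<open>F \<in># \<Phi>\<close> \<open>F \<noteq> Imp (Box \<phi>) \<psi>\<close> by (simp add: ac_simps)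
next
  case (SLtR \<Phi> \<Gamma> \<phi>)
  have "\<not> is_box F" using left_split_shape[OF F] by auto
  then have "F \<in># \<Phi>" using SLtR.prems by (auto simp: box_ms_def)
  let ?T = "R + (\<Phi> - {#F#}) + box_ms \<Gamma>"
  have "G4iSLt (R + add_mset (Box \<phi>) ((\<Phi> - {#F#}) + \<Gamma>)) \<phi>"
    using SLtR.IH \<open>F \<in># \<Phi>\<close> by simp
  from unbox_ms_admissible[OF this] have "G4iSLt (add_mset (Box \<phi>) (image_mset unbox ?T)) \<phi>"
    using SLtR.hyps(1) by (simp add: add.assoc)
  then have "G4iSLt ?T (Box \<phi>)" by (rule SLtR_unboxed)
  then show ?case using \<open>F \<in># \<Phi>\<close> by (simp add: ac_simps)
qed

lemma AndL_inversion: "G4iSLt (add_mset (And a b) T) C \<Longrightarrow> G4iSLt (add_mset a (add_mset b T)) C"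
  using left_split_admissible[OF left_split.intros(1)] by fastforce

lemma OrL_inversion:
  "G4iSLt (add_mset (Or a b) T) C \<Longrightarrow> G4iSLt (add_mset a T) C \<and> G4iSLt (add_mset b T) C"
  using left_split_admissible[OF left_split.intros(2)] left_split_admissible[OF left_split.intros(3)]
  by fastforce

lemma ImpR_inversion: "G4iSLt S (Imp a b) \<Longrightarrow> G4iSLt (add_mset a S) b"
proof (induction S "Imp a b" rule: G4iSLt.induct)
  case (BotL \<Gamma>)
  then show ?case by (metis G4iSLt.BotL add_mset_commute)
next
  case (AndL \<phi> \<psi> \<Gamma>)
  then have "G4iSLt (add_mset (And \<phi> \<psi>) (add_mset a \<Gamma>)) b" by (intro G4iSLt.AndL) (simp add: add_mset_commute)
  then show ?case by (simp add: add_mset_commute)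
next
  case (OrL \<phi> \<Gamma> \<psi>)
  then have "G4iSLt (add_mset (Or \<phi> \<psi>) (add_mset a \<Gamma>)) b" by (intro G4iSLt.OrL) (simp_all add: add_mset_commute)
  then show ?case by (simp add: add_mset_commute)
next
  case (VarImpL p \<phi> \<Gamma>)
  then have "G4iSLt (add_mset (Var p) (add_mset (Imp (Var p) \<phi>) (add_mset a \<Gamma>))) b"
    by (intro G4iSLt.VarImpL) (simp add: add_mset_commute)
  then show ?case by (simp add: add_mset_commute)
next
  case (BoxImpL \<Phi> \<Gamma> \<psi> \<phi>)
  have "G4iSLt (add_mset \<psi> (add_mset (Box \<phi>) (image_mset unbox (add_mset a (\<Phi> + box_ms \<Gamma>))))) \<phi>"
    using weakening[OF BoxImpL.hyps(2), of "unbox a"] BoxImpL.hyps(1) by (simp add: add_mset_commute)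
  moreover have "G4iSLt (add_mset \<psi> (add_mset a (\<Phi> + box_ms \<Gamma>))) b"
    using BoxImpL by (simp add: add_mset_commute)
  ultimately have "G4iSLt (add_mset (Imp (Box \<phi>) \<psi>) (add_mset a (\<Phi> + box_ms \<Gamma>))) b" by (rule BoxImpL_unboxed)
  then show ?case by (simp add: add_mset_commute)
next
  case (AndImpL \<phi> \<psi> \<chi> \<Gamma>)
  then have "G4iSLt (add_mset (Imp (And \<phi> \<psi>) \<chi>) (add_mset a \<Gamma>)) b"
    by (intro G4iSLt.AndImpL) (simp add: add_mset_commute)
  then show ?case by (simp add: add_mset_commute)
next
  case (OrImpL \<phi> \<chi> \<psi> \<Gamma>)
  then have "G4iSLt (add_mset (Imp (Or \<phi> \<psi>) \<chi>) (add_mset a \<Gamma>)) b"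
    by (intro G4iSLt.OrImpL) (simp add: add_mset_commute)
  then show ?case by (simp add: add_mset_commute)
next
  case (ImpImpL \<psi> \<chi> \<Gamma> \<phi>)
  have "G4iSLt (add_mset a (add_mset (Imp \<psi> \<chi>) \<Gamma>)) (Imp \<phi> \<psi>)" using weakening[OF ImpImpL.hyps(1)] .
  then have "G4iSLt (add_mset (Imp (Imp \<phi> \<psi>) \<chi>) (add_mset a \<Gamma>)) b" using ImpImpL
    by (intro G4iSLt.ImpImpL) (simp_all add: add_mset_commute)
  then show ?case by (simp add: add_mset_commute)
qed auto

definition mp_admissible :: "form multiset \<Rightarrow> form \<Rightarrow> bool" where
  "mp_admissible T y \<longleftrightarrow>
     (\<forall>U B C. G4iSLt (add_mset B (T + U)) C \<longrightarrow> G4iSLt (add_mset (Imp y B) (T + U)) C)"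

lemma mp_admissible_Imp: "G4iSLt T (Imp a b) \<Longrightarrow> mp_admissible T (Imp a b)"
  unfolding mp_admissible_def
  by (metis G4iSLt.ImpImpL weakening weakening_ms)

lemma mp_admissible_And: "mp_admissible T a \<Longrightarrow> mp_admissible T b \<Longrightarrow> mp_admissible T (And a b)"
  unfolding mp_admissible_def by (auto intro: G4iSLt.AndImpL)

lemma mp_admissible_Or:
  assumes "mp_admissible T a \<or> mp_admissible T b"
  shows "mp_admissible T (Or a b)"
  unfolding mp_admissible_def
proof (intro allI impI)
  fix U B C assume h: "G4iSLt (add_mset B (T + U)) C"
  have "G4iSLt (add_mset B (T + add_mset (Imp b B) U)) C" "G4iSLt (add_mset B (T + add_mset (Imp a B) U)) C"
    using weakening[OF h, of "Imp b B"] weakening[OF h, of "Imp a B"] by (simp_all add: add_mset_commute)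
  then have "G4iSLt (add_mset (Imp a B) (T + add_mset (Imp b B) U)) C
    \<or> G4iSLt (add_mset (Imp b B) (T + add_mset (Imp a B) U)) C"
    using assms unfolding mp_admissible_def by blast
  then have "G4iSLt (add_mset (Imp a B) (add_mset (Imp b B) (T + U))) C"
    by (auto simp: add_mset_commute)
  then show "G4iSLt (add_mset (Imp (Or a b) B) (T + U)) C" by (rule G4iSLt.OrImpL)
qed

lemma mp_admissible_Box:
  assumes "G4iSLt (image_mset unbox T) a"
  shows "mp_admissible T (Box a)"
  unfolding mp_admissible_def
proof (intro allI impI)
  fix U B C assume "G4iSLt (add_mset B (T + U)) C"
  moreover have "G4iSLt (add_mset B (add_mset (Box a) (image_mset unbox (T + U)))) a"
    using weakening weakening_ms assms by simp
  ultimately show "G4iSLt (add_mset (Imp (Box a) B) (T + U)) C"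
    using BoxImpL_unboxed by blast
qed

lemma mp_admissible_mono: "mp_admissible T y \<Longrightarrow> mp_admissible (T + T') y"
  unfolding mp_admissible_def by (metis add.assoc)

lemma mp_admissible_AndL:
  assumes "mp_admissible (add_mset a (add_mset b T)) y"
  shows "mp_admissible (add_mset (And a b) T) y"
  unfolding mp_admissible_def
proof (intro allI impI)
  fix U B C assume "G4iSLt (add_mset B (add_mset (And a b) T + U)) C"
  then have "G4iSLt (add_mset (And a b) (add_mset B (T + U))) C" by (simp add: add_mset_commute)
  then have "G4iSLt (add_mset a (add_mset b (add_mset B (T + U)))) C" by (rule AndL_inversion)
  then have "G4iSLt (add_mset B (add_mset a (add_mset b T) + U)) C" by (simp add: add_mset_commute)
  then have "G4iSLt (add_mset (Imp y B) (add_mset a (add_mset b T) + U)) C"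
    using assms unfolding mp_admissible_def by blast
  then have "G4iSLt (add_mset (And a b) (add_mset (Imp y B) (T + U))) C"
    by (intro G4iSLt.AndL) (simp add: add_mset_commute)
  then show "G4iSLt (add_mset (Imp y B) (add_mset (And a b) T + U)) C"
    by (simp add: add_mset_commute)
qed

lemma mp_admissible_OrL:
  assumes "mp_admissible (add_mset a T) y" "mp_admissible (add_mset b T) y"
  shows "mp_admissible (add_mset (Or a b) T) y"
  unfolding mp_admissible_def
proof (intro allI impI)
  fix U B C assume "G4iSLt (add_mset B (add_mset (Or a b) T + U)) C"
  then have "G4iSLt (add_mset (Or a b) (add_mset B (T + U))) C" by (simp add: add_mset_commute)
  then have "G4iSLt (add_mset a (add_mset B (T + U))) C" "G4iSLt (add_mset b (add_mset B (T + U))) C"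
    using OrL_inversion by blast+
  then have "G4iSLt (add_mset B (add_mset a T + U)) C" "G4iSLt (add_mset B (add_mset b T + U)) C"
    by (simp_all add: add_mset_commute)
  then have "G4iSLt (add_mset (Imp y B) (add_mset a T + U)) C"
    "G4iSLt (add_mset (Imp y B) (add_mset b T + U)) C"
    using assms unfolding mp_admissible_def by blast+
  then have "G4iSLt (add_mset (Or a b) (add_mset (Imp y B) (T + U))) C"
    by (intro G4iSLt.OrL) (simp_all add: add_mset_commute)
  then show "G4iSLt (add_mset (Imp y B) (add_mset (Or a b) T + U)) C"
    by (simp add: add_mset_commute)
qed

text \<open>Identity for \<open>Imp a b\<close> needs modus ponens on the left for a, hence the joint induction.\<close>

lemma identity_and_mp_admissible: "G4iSLt (add_mset A T) A \<and> mp_admissible {#A#} A"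
proof (induction A arbitrary: T)
  case (Var p)
  have "mp_admissible {#Var p#} (Var p)"
    unfolding mp_admissible_def by simp (metis G4iSLt.VarImpL add_mset_commute)
  then show ?case by (simp add: G4iSLt.IdP)
next
  case Bot
  then show ?case by (simp add: G4iSLt.BotL mp_admissible_def) (metis G4iSLt.BotL add_mset_commute)
next
  case (And a b)
  have "G4iSLt (add_mset a (add_mset b T)) a" "G4iSLt (add_mset a (add_mset b T)) b"
    using And.IH by (metis add_mset_commute)+
  moreover have "mp_admissible (add_mset a (add_mset b {#})) (And a b)"
    using And.IH mp_admissible_mono[of "{#a#}" a "{#b#}"] mp_admissible_mono[of "{#b#}" b "{#a#}"]
    by (intro mp_admissible_And) (simp_all add: add_mset_commute)
  ultimately show ?case by (auto intro: G4iSLt.AndL G4iSLt.AndR mp_admissible_AndL)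
next
  case (Or a b)
  have "mp_admissible (add_mset a {#}) (Or a b)" "mp_admissible (add_mset b {#}) (Or a b)"
    using Or.IH by (auto intro: mp_admissible_Or)
  then show ?case using Or.IH
    by (auto intro: G4iSLt.OrL G4iSLt.OrR1 G4iSLt.OrR2 mp_admissible_OrL)
next
  case (Imp a b)
  have id: "G4iSLt (add_mset (Imp a b) T') (Imp a b)" for T'
  proof -
    have "G4iSLt (add_mset b ({#a#} + T')) b" using Imp.IH by blast
    then have "G4iSLt (add_mset (Imp a b) ({#a#} + T')) b"
      using Imp.IH unfolding mp_admissible_def by blast
    then show ?thesis by (intro G4iSLt.ImpR) (simp add: add_mset_commute)
  qed
  then show ?case using mp_admissible_Imp[OF id[of "{#}"]] by simp
next
  case (Box a)
  have "G4iSLt (add_mset a (add_mset (Box a) (image_mset unbox T))) a"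
    "G4iSLt (add_mset a {#}) a"
    using Box.IH by blast+
  then have "G4iSLt (add_mset (Box a) (image_mset unbox (add_mset (Box a) T))) a"
    "G4iSLt (image_mset unbox {#Box a#}) a"
    by (simp_all add: add_mset_commute)
  then show ?case using SLtR_unboxed mp_admissible_Box by blast
qed

lemma identity: "G4iSLt (add_mset A T) A"
  using identity_and_mp_admissible by blast

lemma mp_admissible_member: "y \<in># T \<Longrightarrow> mp_admissible T y"
  using identity_and_mp_admissible mp_admissible_mono by (metis add_mset_add_single multi_member_split add.commute)

section \<open>Trivially derivable formulas\<close>

inductive_set closure :: "form set \<Rightarrow> form set" for X where
  base: "y \<in> X \<Longrightarrow> y \<in> closure X"
| AndI: "a \<in> closure X \<Longrightarrow> b \<in> closure X \<Longrightarrow> And a b \<in> closure X"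
| OrI1: "a \<in> closure X \<Longrightarrow> Or a b \<in> closure X"
| OrI2: "b \<in> closure X \<Longrightarrow> Or a b \<in> closure X"
| ImpI: "b \<in> closure X \<Longrightarrow> Imp a b \<in> closure X"
| BoxI: "a \<in> closure X \<Longrightarrow> Box a \<in> closure X"
| AndImpI: "Imp a (Imp b c) \<in> closure X \<Longrightarrow> Imp (And a b) c \<in> closure X"
| OrImpI: "Imp a c \<in> closure X \<Longrightarrow> Imp b c \<in> closure X \<Longrightarrow> Imp (Or a b) c \<in> closure X"
| ImpImpI: "a \<in> closure X \<Longrightarrow> Imp b c \<in> closure X \<Longrightarrow> Imp (Imp a b) c \<in> closure X"

lemma closure_mono: "X \<subseteq> closure Y \<Longrightarrow> closure X \<subseteq> closure Y"
proof
  fix y assume "X \<subseteq> closure Y" and "y \<in> closure X"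
  from \<open>y \<in> closure X\<close> show "y \<in> closure Y"
    using \<open>X \<subseteq> closure Y\<close> by (induction rule: closure.induct) (auto intro: closure.intros)
qed

lemma closure_provable: "y \<in> closure (set_mset T) \<Longrightarrow> G4iSLt T y \<and> mp_admissible T y"
proof (induction rule: closure.induct)
  case (base y)
  then show ?case using identity mp_admissible_member by (metis multi_member_split)
next
  case (AndI a b)
  then show ?case by (simp add: G4iSLt.AndR mp_admissible_And)
next
  case (OrI1 a b)
  then show ?case by (simp add: G4iSLt.OrR1 mp_admissible_Or)
next
  case (OrI2 b a)
  then show ?case by (simp add: G4iSLt.OrR2 mp_admissible_Or)
next
  case (ImpI b a)
  then have "G4iSLt T (Imp a b)" using weakening by (intro G4iSLt.ImpR) auto
  then show ?case using mp_admissible_Imp by blast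
next
  case (BoxI a)
  then have "G4iSLt (image_mset unbox T) a" using unbox_all_admissible by blast
  then show ?case using SLtR_unboxed weakening mp_admissible_Box by simp
next
  case (AndImpI a b c)
  then have "G4iSLt (add_mset b (add_mset a T)) c" using ImpR_inversion by blast
  then have "G4iSLt T (Imp (And a b) c)"
    by (intro G4iSLt.ImpR G4iSLt.AndL) (simp add: add_mset_commute)
  then show ?case using mp_admissible_Imp by blast
next
  case (OrImpI a c b)
  then have "G4iSLt T (Imp (Or a b) c)"
    using ImpR_inversion by (intro G4iSLt.ImpR G4iSLt.OrL) auto
  then show ?case using mp_admissible_Imp by blast
next
  case (ImpImpI a b c)
  then have "G4iSLt (add_mset b T) c" using ImpR_inversion by blast
  then have "G4iSLt (add_mset (Imp a b) T) c"
    using ImpImpI.IH(1) unfolding mp_admissible_def by (metis add.right_neutral)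
  then have "G4iSLt T (Imp (Imp a b) c)" by (rule G4iSLt.ImpR)
  then show ?case using mp_admissible_Imp by blast
qed

lemma closure_sound: "y \<in> closure (set_mset T) \<Longrightarrow> G4iSLt T y"
  using closure_provable by blast

section \<open>Kripke semantics and soundness of iSLH\<close>

text \<open>
  Worlds are lists of numbers so that a glued model can tag the worlds of its i-th component
  with i. The rank, bounded by the height, witnesses the converse well-foundedness of acc.
\<close>

record model =
  worlds :: "nat list set"
  leq :: "nat list \<Rightarrow> nat list \<Rightarrow> bool"
  acc :: "nat list \<Rightarrow> nat list \<Rightarrow> bool"
  val :: "nat list \<Rightarrow> nat \<Rightarrow> bool"
  rank :: "nat list \<Rightarrow> nat"
  height :: nat

fun forces :: "model \<Rightarrow> nat list \<Rightarrow> form \<Rightarrow> bool" where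
  "forces M w (Var p) = val M w p"
| "forces M w Bot = False"
| "forces M w (And a b) = (forces M w a \<and> forces M w b)"
| "forces M w (Or a b) = (forces M w a \<or> forces M w b)"
| "forces M w (Imp a b) = (\<forall>v\<in>worlds M. leq M w v \<longrightarrow> forces M v a \<longrightarrow> forces M v b)"
| "forces M w (Box a) = (\<forall>v\<in>worlds M. acc M w v \<longrightarrow> forces M v a)"

definition iSL_model :: "model \<Rightarrow> bool" where
  "iSL_model M \<longleftrightarrow> (\<forall>w\<in>worlds M. leq M w w)
    \<and> (\<forall>u\<in>worlds M. \<forall>v\<in>worlds M. \<forall>w\<in>worlds M. leq M u v \<longrightarrow> leq M v w \<longrightarrow> leq M u w)
    \<and> (\<forall>v\<in>worlds M. \<forall>w\<in>worlds M. acc M v w \<longrightarrow> leq M v w)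
    \<and> (\<forall>u\<in>worlds M. \<forall>v\<in>worlds M. \<forall>w\<in>worlds M. leq M u v \<longrightarrow> acc M v w \<longrightarrow> acc M u w)
    \<and> (\<forall>v\<in>worlds M. \<forall>w\<in>worlds M. acc M v w \<longrightarrow> rank M w < rank M v)
    \<and> (\<forall>w\<in>worlds M. rank M w < height M)
    \<and> (\<forall>v\<in>worlds M. \<forall>w\<in>worlds M. \<forall>p. leq M v w \<longrightarrow> val M v p \<longrightarrow> val M w p)"

lemma
  assumes "iSL_model M"
  shows leq_refl: "w \<in> worlds M \<Longrightarrow> leq M w w"
    and leq_trans: "u \<in> worlds M \<Longrightarrow> v \<in> worlds M \<Longrightarrow> w \<in> worlds M \<Longrightarrow>
      leq M u v \<Longrightarrow> leq M v w \<Longrightarrow> leq M u w"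
    and acc_leq: "v \<in> worlds M \<Longrightarrow> w \<in> worlds M \<Longrightarrow> acc M v w \<Longrightarrow> leq M v w"
    and leq_acc: "u \<in> worlds M \<Longrightarrow> v \<in> worlds M \<Longrightarrow> w \<in> worlds M \<Longrightarrow>
      leq M u v \<Longrightarrow> acc M v w \<Longrightarrow> acc M u w"
    and rank_acc: "v \<in> worlds M \<Longrightarrow> w \<in> worlds M \<Longrightarrow> acc M v w \<Longrightarrow> rank M w < rank M v"
    and rank_height: "w \<in> worlds M \<Longrightarrow> rank M w < height M"
    and val_mono: "v \<in> worlds M \<Longrightarrow> w \<in> worlds M \<Longrightarrow> leq M v w \<Longrightarrow> val M v p \<Longrightarrow> val M w p"
  using assms unfolding iSL_model_def by blast+

lemma iSL_modelI:
  assumes "\<And>w. w \<in> worlds M \<Longrightarrow> leq M w w"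
    and "\<And>u v w. u \<in> worlds M \<Longrightarrow> v \<in> worlds M \<Longrightarrow> w \<in> worlds M \<Longrightarrow>
      leq M u v \<Longrightarrow> leq M v w \<Longrightarrow> leq M u w"
    and "\<And>v w. v \<in> worlds M \<Longrightarrow> w \<in> worlds M \<Longrightarrow> acc M v w \<Longrightarrow> leq M v w"
    and "\<And>u v w. u \<in> worlds M \<Longrightarrow> v \<in> worlds M \<Longrightarrow> w \<in> worlds M \<Longrightarrow>
      leq M u v \<Longrightarrow> acc M v w \<Longrightarrow> acc M u w"
    and "\<And>v w. v \<in> worlds M \<Longrightarrow> w \<in> worlds M \<Longrightarrow> acc M v w \<Longrightarrow> rank M w < rank M v"
    and "\<And>w. w \<in> worlds M \<Longrightarrow> rank M w < height M"
    and "\<And>v w p. v \<in> worlds M \<Longrightarrow> w \<in> worlds M \<Longrightarrow> leq M v w \<Longrightarrow> val M v p \<Longrightarrow> val M w p"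
  shows "iSL_model M"
  unfolding iSL_model_def by (intro conjI ballI allI impI) (rule assms; assumption)+

lemma forces_mono:
  "iSL_model M \<Longrightarrow> v \<in> worlds M \<Longrightarrow> w \<in> worlds M \<Longrightarrow> leq M v w \<Longrightarrow> forces M v A \<Longrightarrow> forces M w A"
proof (induction A arbitrary: v w)
  case (Var p)
  then show ?case using val_mono by simp
next
  case (Imp a b)
  then show ?case by (simp (no_asm_use)) (meson leq_trans)
next
  case (Box a)
  then show ?case by (simp (no_asm_use)) (meson leq_acc)
qed auto

lemma forces_Imp_refl:
  "iSL_model M \<Longrightarrow> w \<in> worlds M \<Longrightarrow> forces M w (Imp a b) \<Longrightarrow> forces M w a \<Longrightarrow> forces M w b"
  using leq_refl by fastforce

lemma forces_Loeb:
  assumes M: "iSL_model M"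
  shows "w \<in> worlds M \<Longrightarrow> forces M w (Imp (Box a) a) \<Longrightarrow> forces M w a"
proof (induction "rank M w" arbitrary: w rule: less_induct)
  case less
  have "forces M v a" if v: "v \<in> worlds M" "acc M w v" for v
  proof -
    have "forces M v (Imp (Box a) a)"
      using forces_mono[OF M less.prems(1) v(1) acc_leq[OF M less.prems(1) v]] less.prems(2) .
    then show ?thesis using less.hyps[OF rank_acc[OF M less.prems(1) v]] v(1) by blast
  qed
  then show ?case using forces_Imp_refl[OF M less.prems] by simp
qed

lemma axiom_sound: "axiom A \<Longrightarrow> iSL_model M \<Longrightarrow> w \<in> worlds M \<Longrightarrow> forces M w A"
proof (induction rule: axiom.induct)
  case (A1 \<phi> \<psi>)
  then show ?case using forces_mono by fastforce
next
  case (A2 \<phi> \<psi> \<chi>)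
  then show ?case by (simp (no_asm_use)) (meson leq_refl leq_trans)
next
  case (A5 \<phi> \<chi> \<psi>)
  then show ?case by (simp (no_asm_use)) (meson leq_trans)
next
  case (A8 \<phi> \<psi> \<chi>)
  then show ?case by (simp (no_asm_use)) (meson leq_trans)
next
  case (AK \<phi> \<psi>)
  then show ?case by (simp (no_asm_use)) (meson leq_refl leq_acc)
next
  case (AGL \<phi>)
  then show ?case using forces_Loeb forces.simps(5) by blast
qed auto

definition entails :: "form set \<Rightarrow> form \<Rightarrow> bool" where
  "entails G A \<longleftrightarrow> (\<forall>M w. iSL_model M \<longrightarrow> w \<in> worlds M \<longrightarrow> (\<forall>g\<in>G. forces M w g) \<longrightarrow> forces M w A)"

lemma iSLH_sound: "iSLH \<Gamma> \<phi> \<Longrightarrow> \<exists>G. finite G \<and> G \<subseteq> \<Gamma> \<and> entails G \<phi>"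
proof (induction rule: iSLH.induct)
  case (Ax \<phi> \<Gamma>)
  then have "entails {} \<phi>" using axiom_sound by (auto simp: entails_def)
  then show ?case by blast
next
  case (El \<phi> \<Gamma>)
  then have "finite {\<phi>} \<and> {\<phi>} \<subseteq> \<Gamma> \<and> entails {\<phi>} \<phi>" by (simp add: entails_def)
  then show ?case by blast
next
  case (Nec \<phi> \<Gamma>)
  then have "entails {} (Box \<phi>)" by (auto simp: entails_def)
  then show ?case by blast
next
  case (MP \<Gamma> \<phi> \<psi>)
  then obtain G1 G2 where "finite G1" "G1 \<subseteq> \<Gamma>" "entails G1 \<phi>" "finite G2" "G2 \<subseteq> \<Gamma>" "entails G2 (Imp \<phi> \<psi>)"
    by blast
  then have "finite (G1 \<union> G2) \<and> G1 \<union> G2 \<subseteq> \<Gamma> \<and> entails (G1 \<union> G2) \<psi>"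
    unfolding entails_def using forces_Imp_refl by blast
  then show ?case by blast
qed

section \<open>Countermodels\<close>

definition refutable :: "form multiset \<Rightarrow> form \<Rightarrow> bool" where
  "refutable S C \<longleftrightarrow>
     (\<exists>M w. iSL_model M \<and> w \<in> worlds M \<and> (\<forall>F\<in>#S. forces M w F) \<and> \<not> forces M w C)"

definition rooted :: "model \<Rightarrow> nat list \<Rightarrow> bool" where
  "rooted M r \<longleftrightarrow> iSL_model M \<and> r \<in> worlds M \<and> (\<forall>v\<in>worlds M. leq M r v)"

definition restrict :: "model \<Rightarrow> nat list \<Rightarrow> model" where
  "restrict M r = M\<lparr>worlds := {v \<in> worlds M. leq M r v}\<rparr>"

lemma restrict_simps [simp]:
  "worlds (restrict M r) = {v \<in> worlds M. leq M r v}"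
  "leq (restrict M r) = leq M" "acc (restrict M r) = acc M" "val (restrict M r) = val M"
  by (simp_all add: restrict_def)

lemma forces_restrict:
  assumes M: "iSL_model M" and r: "r \<in> worlds M"
  shows "v \<in> worlds (restrict M r) \<Longrightarrow> forces (restrict M r) v A = forces M v A"
proof (induction A arbitrary: v)
  case (Imp a b)
  then have "u \<in> worlds (restrict M r)" if "u \<in> worlds M" "leq M v u" for u
    using leq_trans[OF M r _ that(1)] that by auto
  then show ?case using Imp by (simp (no_asm_use)) blast
next
  case (Box a)
  then have "u \<in> worlds (restrict M r)" if "u \<in> worlds M" "acc M v u" for u
    using leq_trans[OF M r _ that(1)] acc_leq[OF M _ that(1)] that by auto
  then show ?case using Box by (simp (no_asm_use)) blast
qed simp_all

lemma iSL_model_restrict_worlds: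
  assumes "iSL_model M" "W \<subseteq> worlds M"
  shows "iSL_model (M\<lparr>worlds := W\<rparr>)"
  unfolding iSL_model_def
  by (simp; intro conjI ballI allI impI;
      meson assms subsetD leq_refl leq_trans acc_leq leq_acc rank_acc rank_height val_mono)

lemma rooted_restrict:
  assumes M: "iSL_model M" and r: "r \<in> worlds M"
  shows "rooted (restrict M r) r"
  using iSL_model_restrict_worlds[OF M] leq_refl[OF M r] r unfolding rooted_def restrict_def by auto

lemma refutable_rooted:
  assumes "refutable S C"
  obtains M r where "rooted M r" "\<forall>F\<in>#S. forces M r F" "\<not> forces M r C"
proof -
  from assms obtain M w where M: "iSL_model M" "w \<in> worlds M" "\<forall>F\<in>#S. forces M w F" "\<not> forces M w C"
    unfolding refutable_def by blast
  have "w \<in> worlds (restrict M w)" using rooted_restrict[OF M(1,2)] by (simp add: rooted_def)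
  then show thesis using that rooted_restrict[OF M(1,2)] M(3,4) forces_restrict[OF M(1,2)] by simp
qed

abbreviation holds :: "model \<times> nat list \<Rightarrow> form \<Rightarrow> bool" where
  "holds m A \<equiv> forces (fst m) (snd m) A"

text \<open>
  A fresh root [] below the pointed models ms, whose acc-successors are exactly the component
  worlds forcing all of G.
\<close>

definition glue :: "(model \<times> nat list) list \<Rightarrow> nat set \<Rightarrow> form set \<Rightarrow> model" where
  "glue ms P G = \<lparr>
     worlds = insert [] {i # v | i v. i < length ms \<and> v \<in> worlds (fst (ms ! i))},
     leq = (\<lambda>x y. x = [] \<or> (y \<noteq> [] \<and> hd x = hd y \<and> leq (fst (ms ! hd x)) (tl x) (tl y))),
     acc = (\<lambda>x y. y \<noteq> [] \<and>
              (if x = [] then \<forall>g\<in>G. forces (fst (ms ! hd y)) (tl y) g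
               else hd x = hd y \<and> acc (fst (ms ! hd x)) (tl x) (tl y))),
     val = (\<lambda>x p. if x = [] then p \<in> P else val (fst (ms ! hd x)) (tl x) p),
     rank = (\<lambda>x. if x = [] then (\<Sum>m\<leftarrow>ms. height (fst m)) else rank (fst (ms ! hd x)) (tl x)),
     height = (\<Sum>m\<leftarrow>ms. height (fst m)) + 1 \<rparr>"

definition gluable :: "(model \<times> nat list) list \<Rightarrow> nat set \<Rightarrow> form set \<Rightarrow> bool" where
  "gluable ms P G \<longleftrightarrow> (\<forall>m\<in>set ms. rooted (fst m) (snd m) \<and> (\<forall>p\<in>P. val (fst m) (snd m) p)
     \<and> (\<forall>g\<in>G. holds m g \<or> holds m (Box g)))"

lemma glue_root_worlds [simp]: "[] \<in> worlds (glue ms P G)"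
  by (simp add: glue_def)

lemma glue_Cons_worlds [simp]:
  "i # v \<in> worlds (glue ms P G) \<longleftrightarrow> i < length ms \<and> v \<in> worlds (fst (ms ! i))"
  by (simp add: glue_def)

lemma glue_Cons_simps [simp]:
  "leq (glue ms P G) (i # v) y \<longleftrightarrow> (\<exists>u. y = i # u \<and> leq (fst (ms ! i)) v u)"
  "acc (glue ms P G) (i # v) y \<longleftrightarrow> (\<exists>u. y = i # u \<and> acc (fst (ms ! i)) v u)"
  "val (glue ms P G) (i # v) = val (fst (ms ! i)) v"
  "rank (glue ms P G) (i # v) = rank (fst (ms ! i)) v"
  by (cases y; auto simp: glue_def)+

lemma glue_root_simps [simp]:
  "leq (glue ms P G) [] y"
  "acc (glue ms P G) [] (i # u) \<longleftrightarrow> (\<forall>g\<in>G. forces (fst (ms ! i)) u g)"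
  "\<not> acc (glue ms P G) x []"
  "val (glue ms P G) [] p \<longleftrightarrow> p \<in> P"
  "rank (glue ms P G) [] = (\<Sum>m\<leftarrow>ms. height (fst m))"
  "height (glue ms P G) = (\<Sum>m\<leftarrow>ms. height (fst m)) + 1"
  by (simp_all add: glue_def)

lemma glue_worlds_cases:
  assumes "x \<in> worlds (glue ms P G)"
  obtains "x = []" | i v where "x = i # v" "i < length ms" "v \<in> worlds (fst (ms ! i))"
  using assms by (cases x) auto

lemma forces_glue_Cons:
  assumes i: "i < length ms" and v: "v \<in> worlds (fst (ms ! i))"
  shows "forces (glue ms P G) (i # v) A = forces (fst (ms ! i)) v A"
  using v
proof (induction A arbitrary: v)
  case (Imp a b)
  have "(\<forall>y\<in>worlds (glue ms P G). leq (glue ms P G) (i # v) y \<longrightarrow>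
           forces (glue ms P G) y a \<longrightarrow> forces (glue ms P G) y b)
     \<longleftrightarrow> (\<forall>u\<in>worlds (fst (ms ! i)). leq (fst (ms ! i)) v u \<longrightarrow>
           forces (glue ms P G) (i # u) a \<longrightarrow> forces (glue ms P G) (i # u) b)"
    using i by auto
  then show ?case using Imp.IH by simp
next
  case (Box a)
  have "(\<forall>y\<in>worlds (glue ms P G). acc (glue ms P G) (i # v) y \<longrightarrow> forces (glue ms P G) y a)
     \<longleftrightarrow> (\<forall>u\<in>worlds (fst (ms ! i)). acc (fst (ms ! i)) v u \<longrightarrow> forces (glue ms P G) (i # u) a)"
    using i by auto
  then show ?case using Box.IH by simp
qed simp_all

lemma gluableD:
  assumes "gluable ms P G" "i < length ms"
  shows "rooted (fst (ms ! i)) (snd (ms ! i))"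
    and "p \<in> P \<Longrightarrow> val (fst (ms ! i)) (snd (ms ! i)) p"
    and "g \<in> G \<Longrightarrow> holds (ms ! i) g \<or> holds (ms ! i) (Box g)"
  using assms(1) nth_mem[OF assms(2)] unfolding gluable_def by blast+

lemma height_le_glue_rank: "i < length ms \<Longrightarrow> height (fst (ms ! i)) \<le> (\<Sum>m\<leftarrow>ms. height (fst m))"
  by (metis elem_le_sum_list length_map nth_map)

lemma glue_acc_successor:
  assumes gl: "gluable ms P G" and i: "i < length ms"
    and v: "v \<in> worlds (fst (ms ! i))" and w: "w \<in> worlds (fst (ms ! i))"
    and vw: "acc (fst (ms ! i)) v w" and g: "g \<in> G"
  shows "forces (fst (ms ! i)) w g"
proof -
  let ?M = "fst (ms ! i)" and ?r = "snd (ms ! i)"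
  have M: "iSL_model ?M" "?r \<in> worlds ?M" "\<forall>u\<in>worlds ?M. leq ?M ?r u"
    using gluableD(1)[OF gl i] by (simp_all add: rooted_def)
  show ?thesis
    using gluableD(3)[OF gl i g]
  proof
    assume "forces ?M ?r g"
    then show ?thesis using forces_mono[OF M(1,2) w] M(3) w by blast
  next
    assume "forces ?M ?r (Box g)"
    then show ?thesis using leq_acc[OF M(1,2) v w] M(3) v vw w by auto
  qed
qed

lemma iSL_model_glue:
  assumes gl: "gluable ms P G"
  shows "iSL_model (glue ms P G)"
proof -
  let ?g = "glue ms P G"
  have M: "iSL_model (fst (ms ! i))" if "i < length ms" for i
    using gluableD(1)[OF gl that] by (simp add: rooted_def)
  show ?thesis
  proof (rule iSL_modelI)
    fix w assume "w \<in> worlds ?g"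
    then show "leq ?g w w" by (cases rule: glue_worlds_cases) (auto intro: leq_refl[OF M])
  next
    fix u v w assume "u \<in> worlds ?g" "v \<in> worlds ?g" "w \<in> worlds ?g" "leq ?g u v" "leq ?g v w"
    then show "leq ?g u w" by (cases rule: glue_worlds_cases[of u]) (auto, meson leq_trans M)
  next
    fix v w assume "v \<in> worlds ?g" "w \<in> worlds ?g" "acc ?g v w"
    then show "leq ?g v w" by (cases rule: glue_worlds_cases[of v]) (auto intro: acc_leq[OF M])
  next
    fix u v w assume h: "u \<in> worlds ?g" "v \<in> worlds ?g" "w \<in> worlds ?g" "leq ?g u v" "acc ?g v w"
    show "acc ?g u w"
    proof (cases rule: glue_worlds_cases[OF h(2)])
      case 1
      then show ?thesis using h by (cases u) auto
    next
      case (2 i v')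
      then obtain w' where w': "w = i # w'" "w' \<in> worlds (fst (ms ! i))" "acc (fst (ms ! i)) v' w'"
        using h by auto
      then show ?thesis
        using h 2 glue_acc_successor[OF gl 2(2,3) w'(2,3)] leq_acc[OF M]
        by (cases rule: glue_worlds_cases[OF h(1)]) auto
    qed
  next
    fix v w assume h: "v \<in> worlds ?g" "w \<in> worlds ?g" "acc ?g v w"
    then show "rank ?g w < rank ?g v"
      using rank_height[OF M] height_le_glue_rank rank_acc[OF M]
      by (cases rule: glue_worlds_cases[OF h(2)]; cases rule: glue_worlds_cases[OF h(1)]) fastforce+
  next
    fix w assume "w \<in> worlds ?g"
    then show "rank ?g w < height ?g"
      using rank_height[OF M] height_le_glue_rank by (cases rule: glue_worlds_cases) fastforce+
  next
    fix v w p assume h: "v \<in> worlds ?g" "w \<in> worlds ?g" "leq ?g v w" "val ?g v p"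
    then show "val ?g w p"
      using gluableD(1,2)[OF gl] val_mono[OF M]
      by (cases rule: glue_worlds_cases[OF h(2)]; cases rule: glue_worlds_cases[OF h(1)])
        (auto simp: rooted_def, meson)
  qed
qed

lemma glue_rootE:
  assumes gl: "gluable ms P G" and m: "m \<in> set ms"
  obtains i where "i < length ms" "ms ! i = m" "i # snd m \<in> worlds (glue ms P G)"
    "\<And>A. forces (glue ms P G) (i # snd m) A = holds m A"
proof -
  obtain i where i: "i < length ms" "ms ! i = m" using m by (metis in_set_conv_nth)
  have "snd m \<in> worlds (fst m)" using gl m by (simp add: gluable_def rooted_def)
  then show thesis using that i forces_glue_Cons[OF i(1)] by simp
qed

lemma forces_glue_root_member:
  assumes "gluable ms P G" "m \<in> set ms" "forces (glue ms P G) [] A"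
  shows "holds m A"
proof -
  obtain i where "i # snd m \<in> worlds (glue ms P G)"
    "\<And>A. forces (glue ms P G) (i # snd m) A = holds m A"
    using glue_rootE[OF assms(1,2)] by metis
  then show ?thesis
    using forces_mono[OF iSL_model_glue[OF assms(1)] glue_root_worlds] assms(3) by fastforce
qed

lemma forces_glue_root_Imp:
  assumes gl: "gluable ms P G"
    and root: "forces (glue ms P G) [] A \<Longrightarrow> forces (glue ms P G) [] B"
    and members: "\<forall>m\<in>set ms. holds m (Imp A B)"
  shows "forces (glue ms P G) [] (Imp A B)"
proof -
  have "forces (glue ms P G) (i # u) B"
    if "i < length ms" "u \<in> worlds (fst (ms ! i))" "forces (glue ms P G) (i # u) A" for i u
  proof -
    let ?M = "fst (ms ! i)"
    have "rooted ?M (snd (ms ! i))" by (rule gluableD(1)[OF gl that(1)])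
    then have "forces ?M u (Imp A B)"
      using forces_mono members nth_mem[OF that(1)] that(2) unfolding rooted_def by blast
    then show ?thesis
      using that forces_glue_Cons forces_Imp_refl \<open>rooted ?M (snd (ms ! i))\<close>
      unfolding rooted_def by metis
  qed
  then show ?thesis using root by (auto elim: glue_worlds_cases)
qed

lemma forces_glue_root_Box:
  "g \<in> G \<Longrightarrow> forces (glue ms P G) [] (Box g)"
  by (auto elim!: glue_worlds_cases simp: forces_glue_Cons)

lemma not_forces_glue_root_Box:
  assumes gl: "gluable ms P G" and m: "m \<in> set ms"
    and G: "\<forall>g\<in>G. holds m g" and a: "\<not> holds m a"
  shows "\<not> forces (glue ms P G) [] (Box a)"
proof -
  obtain i where i: "i < length ms" "ms ! i = m" "i # snd m \<in> worlds (glue ms P G)"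
    "\<And>A. forces (glue ms P G) (i # snd m) A = holds m A"
    using glue_rootE[OF gl m] by metis
  moreover have "acc (glue ms P G) [] (i # snd m)" using G i(2) by auto
  ultimately show ?thesis using a unfolding forces.simps by blast
qed

lemma not_forces_glue_root_Imp:
  assumes gl: "gluable ms P G" and m: "m \<in> set ms"
    and "holds m a" "\<not> holds m b"
  shows "\<not> forces (glue ms P G) [] (Imp a b)"
proof -
  obtain i where "i # snd m \<in> worlds (glue ms P G)"
    "\<And>A. forces (glue ms P G) (i # snd m) A = holds m A"
    using glue_rootE[OF gl m] by metis
  moreover have "leq (glue ms P G) [] (i # snd m)" by simp
  ultimately show ?thesis using assms(3,4) unfolding forces.simps(5)[of _ "[]"] by blast
qed

text \<open>\<open>fits S m\<close>: the pointed model m can be placed directly above a root forcing S.\<close>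

definition fits :: "form multiset \<Rightarrow> model \<times> nat list \<Rightarrow> bool" where
  "fits S m \<longleftrightarrow> rooted (fst m) (snd m) \<and> (\<forall>F\<in>#S. \<not> is_box F \<longrightarrow> holds m F)
     \<and> (\<forall>g. Box g \<in># S \<longrightarrow> holds m g \<or> holds m (Box g))"

definition unboxed_hold :: "form multiset \<Rightarrow> model \<times> nat list \<Rightarrow> bool" where
  "unboxed_hold S m \<longleftrightarrow> (\<forall>g. Box g \<in># S \<longrightarrow> holds m g)"

text \<open>Only the non-invertible rules ImpImpL, BoxImpL, OrR and SLtR are applicable.\<close>

definition irreducible :: "form multiset \<Rightarrow> form \<Rightarrow> bool" where
  "irreducible S C \<longleftrightarrow> Bot \<notin># S
     \<and> (\<forall>a b. And a b \<notin># S \<and> Or a b \<notin># S \<and> (\<forall>c. Imp (And a b) c \<notin># S \<and> Imp (Or a b) c \<notin># S))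
     \<and> (\<forall>p \<phi>. Var p \<in># S \<longrightarrow> Imp (Var p) \<phi> \<notin># S)
     \<and> (\<forall>p. C = Var p \<longrightarrow> Var p \<notin># S) \<and> (\<forall>a b. C \<noteq> And a b \<and> C \<noteq> Imp a b)"

lemma refutable_by_glue:
  assumes ms: "\<forall>m\<in>set ms. fits S m"
    and irr: "irreducible S C"
    and imp_imp: "\<And>a b c. Imp (Imp a b) c \<in># S \<Longrightarrow>
      \<exists>m\<in>set ms. holds m a \<and> \<not> holds m b"
    and box_imp: "\<And>a b. Imp (Box a) b \<in># S \<Longrightarrow>
      \<exists>m\<in>set ms. unboxed_hold S m \<and> \<not> holds m a"
    and or_goal: "\<And>a b. C = Or a b \<Longrightarrow>
      (\<exists>m\<in>set ms. \<not> holds m a) \<and> (\<exists>m\<in>set ms. \<not> holds m b)"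
    and box_goal: "\<And>a. C = Box a \<Longrightarrow> \<exists>m\<in>set ms. unboxed_hold S m \<and> \<not> holds m a"
  shows "refutable S C"
proof -
  let ?P = "{p. Var p \<in># S}" and ?G = "{g. Box g \<in># S}"
  let ?M = "glue ms ?P ?G"
  have members: "holds m F" if "m \<in> set ms" "F \<in># S" "\<not> is_box F" for m F
    using ms that unfolding fits_def by blast
  have gl: "gluable ms ?P ?G"
    using ms members[of _ "Var _"] unfolding gluable_def fits_def by (simp del: forces.simps(6))
  have "forces ?M [] F" if F: "F \<in># S" for F
  proof (cases F)
    case (Imp A B)
    have "forces ?M [] (Imp A B)"
    proof (rule forces_glue_root_Imp[OF gl])
      show "\<forall>m\<in>set ms. holds m (Imp A B)"
        using members[of _ "Imp A B"] F Imp by (simp del: forces.simps)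
      have "\<not> forces ?M [] A"
      proof (cases A)
        case (Var p)
        then show ?thesis using irr F Imp by (auto simp: irreducible_def)
      next
        case (Imp a b)
        then show ?thesis using imp_imp F \<open>F = Imp A B\<close> not_forces_glue_root_Imp[OF gl] by blast
      next
        case (Box a)
        then show ?thesis using box_imp F \<open>F = Imp A B\<close> not_forces_glue_root_Box[OF gl]
          unfolding unboxed_hold_def by (metis mem_Collect_eq)
      qed (use irr F Imp in \<open>auto simp: irreducible_def\<close>)
      then show "forces ?M [] A \<Longrightarrow> forces ?M [] B" by blast
    qed
    then show ?thesis using Imp by simp
  qed (use irr F forces_glue_root_Box in \<open>auto simp: irreducible_def\<close>)
  moreover have "\<not> forces ?M [] C"
  proof (cases C)
    case (Or a b)
    then show ?thesis using or_goal[OF Or] forces_glue_root_member[OF gl] by auto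
  next
    case (Box a)
    then show ?thesis using box_goal[OF Box] not_forces_glue_root_Box[OF gl]
      unfolding unboxed_hold_def by (metis mem_Collect_eq)
  qed (use irr in \<open>auto simp: irreducible_def\<close>)
  ultimately show ?thesis
    unfolding refutable_def using iSL_model_glue[OF gl] glue_root_worlds by blast
qed

section \<open>A well-founded order for proof search\<close>

fun boxed_subformulas :: "form \<Rightarrow> form set" where
  "boxed_subformulas (Var p) = {}"
| "boxed_subformulas Bot = {}"
| "boxed_subformulas (And a b) = boxed_subformulas a \<union> boxed_subformulas b"
| "boxed_subformulas (Or a b) = boxed_subformulas a \<union> boxed_subformulas b"
| "boxed_subformulas (Imp a b) = boxed_subformulas a \<union> boxed_subformulas b"
| "boxed_subformulas (Box a) = insert (Box a) (boxed_subformulas a)"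

lemma finite_boxed_subformulas [simp]: "finite (boxed_subformulas F)"
  by (induction F) auto

definition sequent_boxes :: "form multiset \<Rightarrow> form \<Rightarrow> form set" where
  "sequent_boxes S C = boxed_subformulas C \<union> (\<Union>F\<in>set_mset S. boxed_subformulas F)"

text \<open>
  SLtR adds \<open>Box a\<close> to the antecedent. Unless the goal \<open>Box a\<close> is already in the closure, and
  hence provable, this decreases the number of open boxes.
\<close>

definition open_boxes :: "form multiset \<Rightarrow> form \<Rightarrow> nat" where
  "open_boxes S C = card (sequent_boxes S C - closure (set_mset S))"

fun exponent :: "form \<Rightarrow> nat" where
  "exponent (Var p) = 1"
| "exponent Bot = 1"
| "exponent (And a b) = exponent a + exponent b + 2"
| "exponent (Or a b) = exponent a + exponent b + 2"
| "exponent (Imp a b) = exponent a + exponent b + 1"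
| "exponent (Box a) = exponent a + 1"

text \<open>
  Exponential weights make the total weight drop also at the premises of ImpImpL and BoxImpL,
  which contain a subformula of the principal formula twice.
\<close>

definition weight :: "form \<Rightarrow> nat" where
  "weight F = 2 ^ exponent F"

definition sequent_weight :: "form multiset \<Rightarrow> form \<Rightarrow> nat" where
  "sequent_weight S C = (\<Sum>F\<in>#S. weight F) + weight C"

definition search_order :: "((form multiset \<times> form) \<times> (form multiset \<times> form)) set" where
  "search_order = measures [\<lambda>(S, C). open_boxes S C, \<lambda>(S, C). sequent_weight S C]"

lemma wf_search_order: "wf search_order"
  by (simp add: search_order_def)

lemma search_order_weightI:
  assumes "sequent_boxes S' C' \<subseteq> sequent_boxes S C" "set_mset S \<subseteq> closure (set_mset S')"
    and "sequent_weight S' C' < sequent_weight S C"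
  shows "((S', C'), (S, C)) \<in> search_order"
proof -
  have "sequent_boxes S' C' - closure (set_mset S') \<subseteq> sequent_boxes S C - closure (set_mset S)"
    using assms(1) closure_mono[OF assms(2)] by blast
  then have "open_boxes S' C' \<le> open_boxes S C"
    unfolding open_boxes_def by (intro card_mono) (auto simp: sequent_boxes_def)
  then show ?thesis using assms(3) by (auto simp: search_order_def)
qed

lemma search_order_closeI:
  assumes "sequent_boxes S' C' \<subseteq> sequent_boxes S C" "set_mset S \<subseteq> closure (set_mset S')"
    and "x \<in> sequent_boxes S C" "x \<notin> closure (set_mset S)" "x \<in> closure (set_mset S')"
  shows "((S', C'), (S, C)) \<in> search_order"
proof -
  have "sequent_boxes S' C' - closure (set_mset S') \<subset> sequent_boxes S C - closure (set_mset S)"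
    using assms closure_mono[OF assms(2)] by blast
  then have "open_boxes S' C' < open_boxes S C"
    unfolding open_boxes_def by (intro psubset_card_mono) (auto simp: sequent_boxes_def)
  then show ?thesis by (simp add: search_order_def)
qed

lemma sequent_boxes_add [simp]:
  "sequent_boxes (add_mset F S) C = boxed_subformulas F \<union> sequent_boxes S C"
  by (auto simp: sequent_boxes_def)

lemma sequent_weight_add [simp]: "sequent_weight (add_mset F S) C = weight F + sequent_weight S C"
  by (simp add: sequent_weight_def)

lemma boxed_subformulas_unbox:
  "(\<Union>F\<in>set_mset (image_mset unbox S). boxed_subformulas F) \<subseteq> (\<Union>F\<in>set_mset S. boxed_subformulas F)"
proof (induction S)
  case (add x S) then show ?case by (cases x) auto
qed simp

lemma weight_unbox: "(\<Sum>F\<in>#image_mset unbox S. weight F) \<le> (\<Sum>F\<in>#S. weight F)"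
proof (induction S)
  case (add x S) then show ?case by (cases x) (auto simp: weight_def)
qed simp

lemma closure_unbox: "set_mset S \<subseteq> closure (set_mset (image_mset unbox S + X))"
proof
  fix F assume "F \<in># S"
  then show "F \<in> closure (set_mset (image_mset unbox S + X))"
    by (cases F) (force intro: closure.base closure.BoxI)+
qed

lemma exponent_pos: "exponent F \<ge> 1"
  by (cases F) auto

lemma pow2_le_half: "x < n \<Longrightarrow> (2::nat) ^ x \<le> 2 ^ n div 2"
proof -
  assume "x < n"
  then obtain k where n: "n = Suc k" and "x \<le> k" by (cases n) auto
  then have "(2::nat) ^ x \<le> 2 ^ k" by (simp add: power_increasing)
  then show ?thesis using n by simp
qed

lemma pow2_add_le: "x < n \<Longrightarrow> y < n \<Longrightarrow> (2::nat) ^ x + 2 ^ y \<le> 2 ^ n"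
proof -
  assume "x < n" "y < n"
  then have "(2::nat) ^ x \<le> 2 ^ n div 2" "(2::nat) ^ y \<le> 2 ^ n div 2" using pow2_le_half by blast+
  moreover have "(2::nat) ^ n div 2 + 2 ^ n div 2 \<le> 2 ^ n" by simp
  ultimately show ?thesis by linarith
qed

lemma weight_And: "weight a + weight b < weight (And a b)"
proof -
  have "weight a + weight b \<le> 2 ^ (exponent a + exponent b + 1)" unfolding weight_def using exponent_pos[of a] exponent_pos[of b] by (intro pow2_add_le) auto
  also have "... < weight (And a b)" unfolding weight_def by simp
  finally show ?thesis .
qed

lemma weight_Or1: "weight a < weight (Or a b)"
  unfolding weight_def by (intro power_strict_increasing) simp_all
lemma weight_Or2: "weight b < weight (Or a b)"
  unfolding weight_def by (intro power_strict_increasing) simp_all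
lemma weight_And1: "weight a < weight (And a b)"
  unfolding weight_def by (intro power_strict_increasing) simp_all
lemma weight_And2: "weight b < weight (And a b)"
  unfolding weight_def by (intro power_strict_increasing) simp_all
lemma weight_Imp2: "weight b < weight (Imp a b)"
  unfolding weight_def by (intro power_strict_increasing) simp_all

lemma weight_Imp: "weight a + weight b < weight (Imp a b)"
proof -
  have "weight a + weight b \<le> 2 ^ (exponent a + exponent b)" unfolding weight_def using exponent_pos[of a] exponent_pos[of b] by (intro pow2_add_le) auto
  also have "... < weight (Imp a b)" unfolding weight_def by simp
  finally show ?thesis .
qed

lemma weight_AndImp: "weight (Imp a (Imp b c)) < weight (Imp (And a b) c)"
  unfolding weight_def by (intro power_strict_increasing) simp_all

lemma weight_OrImp: "weight (Imp a c) + weight (Imp b c) < weight (Imp (Or a b) c)"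
proof -
  have "weight (Imp a c) + weight (Imp b c) \<le> 2 ^ (exponent a + exponent b + exponent c + 2)" unfolding weight_def using exponent_pos[of a] exponent_pos[of b] by (intro pow2_add_le) auto
  also have "... < weight (Imp (Or a b) c)" unfolding weight_def by simp
  finally show ?thesis .
qed

lemma weight_ImpImp: "weight a + weight (Imp b c) + weight b < weight (Imp (Imp a b) c)"
proof -
  have "weight a + weight b \<le> 2 ^ (exponent a + exponent b)" unfolding weight_def using exponent_pos[of a] exponent_pos[of b] by (intro pow2_add_le) auto
  also have "(2::nat) ^ (exponent a + exponent b) + weight (Imp b c) \<le> 2 ^ (exponent a + exponent b + exponent c + 1)"
    unfolding weight_def using exponent_pos[of a] exponent_pos[of b] exponent_pos[of c] by (intro pow2_add_le) auto
  ultimately have "weight a + weight (Imp b c) + weight b \<le> 2 ^ (exponent a + exponent b + exponent c + 1)" by linarith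
  also have "... < weight (Imp (Imp a b) c)" unfolding weight_def by simp
  finally show ?thesis .
qed

lemma weight_BoxImp: "weight b + weight (Box a) + weight a < weight (Imp (Box a) b)"
proof -
  have "weight a + weight (Box a) \<le> 2 ^ (exponent a + 2)" unfolding weight_def by (intro pow2_add_le) auto
  also have "(2::nat) ^ (exponent a + 2) \<le> 2 ^ (exponent a + exponent b + 1)" using exponent_pos[of b] by (intro power_increasing) auto
  finally have 1: "weight a + weight (Box a) \<le> 2 ^ (exponent a + exponent b + 1)" .
  have 2: "weight b \<le> 2 ^ (exponent a + exponent b + 1) div 2" unfolding weight_def using exponent_pos[of a] by (intro pow2_le_half) auto
  have "(2::nat) ^ (exponent a + exponent b + 1) + 2 ^ (exponent a + exponent b + 1) div 2 < 2 ^ (exponent a + exponent b + 2)" by simp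
  moreover have "weight (Imp (Box a) b) = 2 ^ (exponent a + exponent b + 2)" unfolding weight_def by simp
  ultimately show ?thesis using 1 2 by linarith
qed

section \<open>Completeness of proof search\<close>

abbreviation decided :: "form multiset \<Rightarrow> form \<Rightarrow> bool" where
  "decided S C \<equiv> G4iSLt S C \<or> refutable S C"

lemma refutable_transfer:
  assumes "refutable S' C'"
    and "\<And>M w. iSL_model M \<Longrightarrow> w \<in> worlds M \<Longrightarrow> \<forall>F\<in>#S'. forces M w F \<Longrightarrow> \<not> forces M w C' \<Longrightarrow>
      (\<forall>F\<in>#S. forces M w F) \<and> \<not> forces M w C"
  shows "refutable S C"
  using assms unfolding refutable_def by blast

lemma search_AndL:
  assumes IH: "\<And>S' C'. ((S', C'), (S, C)) \<in> search_order \<Longrightarrow> decided S' C'"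
    and S: "S = add_mset (And a b) T"
  shows "decided S C"
proof -
  let ?S' = "add_mset a (add_mset b T)"
  have "((?S', C), (S, C)) \<in> search_order"
    using S weight_And[of a b] by (intro search_order_weightI) (auto intro: closure.intros)
  then have "decided ?S' C" by (rule IH)
  moreover have "refutable S C" if "refutable ?S' C"
    using that by (rule refutable_transfer) (auto simp: S)
  ultimately show ?thesis using S G4iSLt.AndL by blast
qed

lemma search_OrL:
  assumes IH: "\<And>S' C'. ((S', C'), (S, C)) \<in> search_order \<Longrightarrow> decided S' C'"
    and S: "S = add_mset (Or a b) T"
  shows "decided S C"
proof -
  have "((add_mset a T, C), (S, C)) \<in> search_order"
    using S weight_Or1[of a b] by (intro search_order_weightI) (auto intro: closure.intros)
  moreover have "((add_mset b T, C), (S, C)) \<in> search_order"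
    using S weight_Or2[of b a] by (intro search_order_weightI) (auto intro: closure.intros)
  ultimately
  have "decided (add_mset a T) C" "decided (add_mset b T) C" using IH by blast+
  moreover have "refutable S C" if "refutable (add_mset a T) C \<or> refutable (add_mset b T) C"
    using that by (auto simp: S elim!: refutable_transfer)
  ultimately show ?thesis using S G4iSLt.OrL by blast
qed

lemma search_VarImpL:
  assumes IH: "\<And>S' C'. ((S', C'), (S, C)) \<in> search_order \<Longrightarrow> decided S' C'"
    and S: "S = add_mset (Var p) (add_mset (Imp (Var p) \<phi>) T)"
  shows "decided S C"
proof -
  let ?S' = "add_mset (Var p) (add_mset \<phi> T)"
  have "((?S', C), (S, C)) \<in> search_order"
    using S weight_Imp2[of \<phi> "Var p"] by (intro search_order_weightI) (auto intro: closure.intros)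
  then have "decided ?S' C" by (rule IH)
  moreover have "refutable S C" if "refutable ?S' C"
    using that by (rule refutable_transfer) (auto simp: S intro: forces_mono)
  ultimately show ?thesis using S G4iSLt.VarImpL by blast
qed

lemma search_AndImpL:
  assumes IH: "\<And>S' C'. ((S', C'), (S, C)) \<in> search_order \<Longrightarrow> decided S' C'"
    and S: "S = add_mset (Imp (And a b) c) T"
  shows "decided S C"
proof -
  let ?S' = "add_mset (Imp a (Imp b c)) T"
  have "((?S', C), (S, C)) \<in> search_order"
    using S weight_AndImp[of a b c] by (intro search_order_weightI) (auto intro: closure.intros)
  then have "decided ?S' C" by (rule IH)
  moreover have "refutable S C" if "refutable ?S' C"
    using that by (rule refutable_transfer) (auto simp: S, meson leq_refl)
  ultimately show ?thesis using S G4iSLt.AndImpL by blast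
qed

lemma search_OrImpL:
  assumes IH: "\<And>S' C'. ((S', C'), (S, C)) \<in> search_order \<Longrightarrow> decided S' C'"
    and S: "S = add_mset (Imp (Or a b) c) T"
  shows "decided S C"
proof -
  let ?S' = "add_mset (Imp a c) (add_mset (Imp b c) T)"
  have "((?S', C), (S, C)) \<in> search_order"
    using S weight_OrImp[of a c b] by (intro search_order_weightI) (auto intro: closure.intros)
  then have "decided ?S' C" by (rule IH)
  moreover have "refutable S C" if "refutable ?S' C"
    using that by (rule refutable_transfer) (auto simp: S)
  ultimately show ?thesis using S G4iSLt.OrImpL by blast
qed

lemma search_AndR:
  assumes IH: "\<And>S' C'. ((S', C'), (S, C)) \<in> search_order \<Longrightarrow> decided S' C'"
    and C: "C = And a b"
  shows "decided S C"
proof -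
  have "((S, a), (S, C)) \<in> search_order" "((S, b), (S, C)) \<in> search_order"
    using C weight_And1[of a b] weight_And2[of b a]
    by (auto intro!: search_order_weightI intro: closure.base simp: sequent_boxes_def sequent_weight_def)
  then have "decided S a" "decided S b" using IH by blast+
  moreover have "refutable S C" if "refutable S a \<or> refutable S b"
    using that by (auto simp: C elim!: refutable_transfer)
  ultimately show ?thesis using C G4iSLt.AndR by blast
qed

lemma search_ImpR:
  assumes IH: "\<And>S' C'. ((S', C'), (S, C)) \<in> search_order \<Longrightarrow> decided S' C'"
    and C: "C = Imp a b"
  shows "decided S C"
proof -
  have "((add_mset a S, b), (S, C)) \<in> search_order"
    using C weight_Imp[of a b]
    by (intro search_order_weightI) (auto intro: closure.base simp: sequent_boxes_def sequent_weight_def)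
  then have "decided (add_mset a S) b" by (rule IH)
  moreover have "refutable S C" if "refutable (add_mset a S) b"
    using that by (rule refutable_transfer) (auto simp: C dest: leq_refl)
  ultimately show ?thesis using C G4iSLt.ImpR by blast
qed

lemma fits_forces_all:
  "rooted M r \<Longrightarrow> \<forall>F\<in>#S. forces M r F \<Longrightarrow> fits S (M, r)"
  by (auto simp: fits_def)

lemma fits_forces_unbox:
  assumes "rooted M r" "\<forall>F\<in>#image_mset unbox S. forces M r F"
  shows "fits S (M, r)" "unboxed_hold S (M, r)"
proof -
  have "forces M r (unbox F)" if "F \<in># S" for F using assms(2) that by simp
  then have "forces M r F" if "F \<in># S" "\<not> is_box F" for F
    using that unbox_nonbox by fastforce
  moreover have "forces M r g" if "Box g \<in># S" for g
    using that \<open>\<And>F. F \<in># S \<Longrightarrow> forces M r (unbox F)\<close> by fastforce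
  ultimately show "fits S (M, r)" "unboxed_hold S (M, r)"
    using assms(1) unfolding fits_def unboxed_hold_def by auto
qed

lemma search_order_ImpImpL:
  assumes S: "S = add_mset (Imp (Imp a b) c) T"
  shows "((add_mset c T, C), (S, C)) \<in> search_order"
    and "((add_mset a (add_mset (Imp b c) T), b), (S, C)) \<in> search_order"
proof -
  show "((add_mset c T, C), (S, C)) \<in> search_order"
    using S weight_Imp2[of c "Imp a b"] by (intro search_order_weightI) (auto intro: closure.intros)
  show "((add_mset a (add_mset (Imp b c) T), b), (S, C)) \<in> search_order"
    using S weight_ImpImp[of a b c]
    by (intro search_order_weightI) (auto intro: closure.intros simp: sequent_boxes_def sequent_weight_def)
qed

lemma search_order_BoxImpL:
  assumes S: "S = add_mset (Imp (Box a) b) T"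
  shows "((add_mset b T, C), (S, C)) \<in> search_order"
    and "((add_mset b (add_mset (Box a) (image_mset unbox T)), a), (S, C)) \<in> search_order"
proof -
  let ?S' = "add_mset b (add_mset (Box a) (image_mset unbox T))"
  show "((add_mset b T, C), (S, C)) \<in> search_order"
    using S weight_Imp2[of b "Box a"] by (intro search_order_weightI) (auto intro: closure.intros)
  have "set_mset T \<subseteq> closure (set_mset ?S')"
    using closure_unbox[of T "{#b, Box a#}"] by (simp add: add_mset_commute)
  moreover have "Imp (Box a) b \<in> closure (set_mset ?S')"
    by (auto intro: closure.intros)
  moreover have "sequent_weight ?S' a < sequent_weight S C"
    using S weight_unbox[of T] weight_BoxImp[of b a] by (simp add: sequent_weight_def)
  moreover have "sequent_boxes ?S' a \<subseteq> sequent_boxes S C"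
    using S boxed_subformulas_unbox[of T] by (auto simp: sequent_boxes_def)
  ultimately show "((?S', a), (S, C)) \<in> search_order"
    using S by (intro search_order_weightI) auto
qed

lemma search_order_OrR:
  "((S, a), (S, Or a b)) \<in> search_order" "((S, b), (S, Or a b)) \<in> search_order"
  using weight_Or1[of a b] weight_Or2[of b a]
  by (auto intro!: search_order_weightI intro: closure.base simp: sequent_boxes_def sequent_weight_def)

lemma search_order_SLtR:
  assumes "Box a \<notin> closure (set_mset S)"
  shows "((add_mset (Box a) (image_mset unbox S), a), (S, Box a)) \<in> search_order"
proof (rule search_order_closeI)
  show "set_mset S \<subseteq> closure (set_mset (add_mset (Box a) (image_mset unbox S)))"
    using closure_unbox[of S "{#Box a#}"] by simp
  show "sequent_boxes (add_mset (Box a) (image_mset unbox S)) a \<subseteq> sequent_boxes S (Box a)"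
    using boxed_subformulas_unbox[of S] by (auto simp: sequent_boxes_def)
  show "Box a \<in> sequent_boxes S (Box a)" by (simp add: sequent_boxes_def)
  show "Box a \<in> closure (set_mset (add_mset (Box a) (image_mset unbox S)))"
    by (simp add: closure.base)
qed (rule assms)

lemma refutable_Imp_left: "refutable (add_mset c T) C \<Longrightarrow> refutable (add_mset (Imp a c) T) C"
  by (erule refutable_transfer) (auto intro: forces_mono)

lemma finite_witness_list:
  assumes "finite A" "\<forall>x\<in>A. \<exists>m. P m \<and> Q x m"
  obtains ms where "\<forall>m\<in>set ms. P m" "\<forall>x\<in>A. \<exists>m\<in>set ms. Q x m"
proof -
  from assms(2) obtain f where f: "\<forall>x\<in>A. P (f x) \<and> Q x (f x)" by metis
  obtain xs where "set xs = A" using finite_list[OF assms(1)] by blast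
  then show thesis using that[of "map f xs"] f by auto
qed

context
  fixes S :: "form multiset" and C :: form
  assumes IH: "\<And>S' C'. ((S', C'), (S, C)) \<in> search_order \<Longrightarrow> decided S' C'"
    and unprovable: "\<not> G4iSLt S C" and irrefutable: "\<not> refutable S C"
begin

lemma ImpImpL_witness:
  assumes X: "Imp (Imp a b) c \<in># S"
  shows "\<exists>m. fits S m \<and> holds m a \<and> \<not> holds m b"
proof -
  define T where "T = S - {#Imp (Imp a b) c#}"
  have S: "S = add_mset (Imp (Imp a b) c) T" using X by (simp add: T_def)
  have "\<not> refutable (add_mset c T) C"
    using irrefutable refutable_Imp_left unfolding S by blast
  then have "G4iSLt (add_mset c T) C" using IH[OF search_order_ImpImpL(1)[OF S]] by blast
  then have "\<not> G4iSLt (add_mset a (add_mset (Imp b c) T)) b"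
    using unprovable unfolding S by (metis G4iSLt.ImpImpL G4iSLt.ImpR)
  then have "refutable (add_mset a (add_mset (Imp b c) T)) b"
    using IH[OF search_order_ImpImpL(2)[OF S]] by blast
  then obtain M r where M: "rooted M r" "\<forall>F\<in>#add_mset a (add_mset (Imp b c) T). forces M r F"
    "\<not> forces M r b" by (rule refutable_rooted)
  have "forces M r (Imp (Imp a b) c)"
    using M unfolding rooted_def by simp (meson forces_mono leq_refl)
  then have "fits S (M, r)" using M(1,2) S by (intro fits_forces_all) auto
  then show ?thesis using M by auto
qed

lemma BoxImpL_witness:
  assumes Y: "Imp (Box a) b \<in># S"
  shows "\<exists>m. fits S m \<and> unboxed_hold S m \<and> \<not> holds m a"
proof -
  define T where "T = S - {#Imp (Box a) b#}"
  have S: "S = add_mset (Imp (Box a) b) T" using Y by (simp add: T_def)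
  have "\<not> refutable (add_mset b T) C"
    using irrefutable refutable_Imp_left unfolding S by blast
  then have "G4iSLt (add_mset b T) C" using IH[OF search_order_BoxImpL(1)[OF S]] by blast
  then have "\<not> G4iSLt (add_mset b (add_mset (Box a) (image_mset unbox T))) a"
    using unprovable unfolding S by (metis BoxImpL_unboxed)
  then have "refutable (add_mset b (add_mset (Box a) (image_mset unbox T))) a"
    using IH[OF search_order_BoxImpL(2)[OF S]] by blast
  then obtain M r where M: "rooted M r"
    "\<forall>F\<in>#add_mset b (add_mset (Box a) (image_mset unbox T)). forces M r F" "\<not> forces M r a"
    by (rule refutable_rooted)
  have "forces M r (Imp (Box a) b)"
    using M forces_mono unfolding rooted_def by auto
  then have "\<forall>F\<in>#image_mset unbox S. forces M r F" using M(2) S by simp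
  from fits_forces_unbox[OF M(1) this] show ?thesis using M(3) by auto
qed

lemma OrR_witness:
  assumes C: "C = Or a b"
  shows "\<exists>m. fits S m \<and> \<not> holds m a" "\<exists>m. fits S m \<and> \<not> holds m b"
proof -
  have "((S, a), (S, C)) \<in> search_order" "((S, b), (S, C)) \<in> search_order"
    using search_order_OrR C by simp_all
  then have "refutable S a" "refutable S b"
    using IH unprovable G4iSLt.OrR1 G4iSLt.OrR2 unfolding C by blast+
  then show "\<exists>m. fits S m \<and> \<not> holds m a" "\<exists>m. fits S m \<and> \<not> holds m b"
    by (metis refutable_rooted fits_forces_all fst_conv snd_conv)+
qed

lemma SLtR_witness:
  assumes C: "C = Box a"
  shows "\<exists>m. fits S m \<and> unboxed_hold S m \<and> \<not> holds m a"
proof -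
  have "Box a \<notin> closure (set_mset S)" using closure_sound unprovable C by blast
  then have "decided (add_mset (Box a) (image_mset unbox S)) a"
    using IH search_order_SLtR C by blast
  then have "refutable (add_mset (Box a) (image_mset unbox S)) a"
    using unprovable SLtR_unboxed C by blast
  then obtain M r where M: "rooted M r" "\<forall>F\<in>#add_mset (Box a) (image_mset unbox S). forces M r F"
    "\<not> forces M r a" by (rule refutable_rooted)
  then show ?thesis using fits_forces_unbox[OF M(1), of S] by auto
qed

lemma ImpImpL_witnesses:
  obtains ms where "\<forall>m\<in>set ms. fits S m"
    "\<And>a b c. Imp (Imp a b) c \<in># S \<Longrightarrow> \<exists>m\<in>set ms. holds m a \<and> \<not> holds m b"
proof -
  let ?A = "(\<lambda>(a, b, c). Imp (Imp a b) c) -` set_mset S"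
  have "finite ?A" by (rule finite_vimageI) (auto simp: inj_def)
  moreover have "\<forall>x\<in>?A. \<exists>m. fits S m \<and> (\<lambda>(a, b, c). holds m a \<and> \<not> holds m b) x"
    using ImpImpL_witness by auto
  ultimately obtain ms where ms: "\<forall>m\<in>set ms. fits S m"
    "\<forall>x\<in>?A. \<exists>m\<in>set ms. (\<lambda>(a, b, c). holds m a \<and> \<not> holds m b) x"
    by (rule finite_witness_list)
  have "\<exists>m\<in>set ms. holds m a \<and> \<not> holds m b" if "Imp (Imp a b) c \<in># S" for a b c
    using bspec[OF ms(2), of "(a, b, c)"] that by simp
  then show thesis using that ms(1) by blast
qed

lemma BoxImpL_witnesses:
  obtains ms where "\<forall>m\<in>set ms. fits S m"
    "\<And>a b. Imp (Box a) b \<in># S \<Longrightarrow> \<exists>m\<in>set ms. unboxed_hold S m \<and> \<not> holds m a"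
proof -
  let ?A = "(\<lambda>(a, b). Imp (Box a) b) -` set_mset S"
  have "finite ?A" by (rule finite_vimageI) (auto simp: inj_def)
  moreover have "\<forall>x\<in>?A. \<exists>m. fits S m \<and> (\<lambda>(a, b). unboxed_hold S m \<and> \<not> holds m a) x"
    using BoxImpL_witness by auto
  ultimately obtain ms where ms: "\<forall>m\<in>set ms. fits S m"
    "\<forall>x\<in>?A. \<exists>m\<in>set ms. (\<lambda>(a, b). unboxed_hold S m \<and> \<not> holds m a) x"
    by (rule finite_witness_list)
  have "\<exists>m\<in>set ms. unboxed_hold S m \<and> \<not> holds m a" if "Imp (Box a) b \<in># S" for a b
    using bspec[OF ms(2), of "(a, b)"] that by simp
  then show thesis using that ms(1) by blast
qed

lemma irreducible_impossible:
  assumes irr: "irreducible S C"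
  shows False
proof -
  obtain ms1 where ms1: "\<forall>m\<in>set ms1. fits S m"
    "\<And>a b c. Imp (Imp a b) c \<in># S \<Longrightarrow> \<exists>m\<in>set ms1. holds m a \<and> \<not> holds m b"
    by (rule ImpImpL_witnesses) blast
  obtain ms2 where ms2: "\<forall>m\<in>set ms2. fits S m"
    "\<And>a b. Imp (Box a) b \<in># S \<Longrightarrow> \<exists>m\<in>set ms2. unboxed_hold S m \<and> \<not> holds m a"
    by (rule BoxImpL_witnesses) blast
  obtain ms3 where ms3: "\<forall>m\<in>set ms3. fits S m"
    "\<And>a b. C = Or a b \<Longrightarrow> (\<exists>m\<in>set ms3. \<not> holds m a) \<and> (\<exists>m\<in>set ms3. \<not> holds m b)"
  proof (cases C)
    case (Or a b)
    then obtain m1 m2 where "fits S m1" "\<not> holds m1 a" "fits S m2" "\<not> holds m2 b"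
      using OrR_witness by blast
    then show thesis using that[of "[m1, m2]"] Or by auto
  qed (use that[of "[]"] in auto)
  obtain ms4 where ms4: "\<forall>m\<in>set ms4. fits S m"
    "\<And>a. C = Box a \<Longrightarrow> \<exists>m\<in>set ms4. unboxed_hold S m \<and> \<not> holds m a"
  proof (cases C)
    case (Box a)
    then obtain m where "fits S m" "unboxed_hold S m" "\<not> holds m a"
      using SLtR_witness by blast
    then show thesis using that[of "[m]"] Box by auto
  qed (use that[of "[]"] in auto)
  have "refutable S C"
  proof (rule refutable_by_glue[of "ms1 @ ms2 @ ms3 @ ms4"])
    show "\<forall>m\<in>set (ms1 @ ms2 @ ms3 @ ms4). fits S m" using ms1 ms2 ms3 ms4 by auto
    show "irreducible S C" by (rule irr)
    show "\<exists>m\<in>set (ms1 @ ms2 @ ms3 @ ms4). holds m a \<and> \<not> holds m b"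
      if "Imp (Imp a b) c \<in># S" for a b c
      using ms1(2)[OF that] by auto
    show "\<exists>m\<in>set (ms1 @ ms2 @ ms3 @ ms4). unboxed_hold S m \<and> \<not> holds m a"
      if "Imp (Box a) b \<in># S" for a b
      using ms2(2)[OF that] by auto
    show "(\<exists>m\<in>set (ms1 @ ms2 @ ms3 @ ms4). \<not> holds m a)
      \<and> (\<exists>m\<in>set (ms1 @ ms2 @ ms3 @ ms4). \<not> holds m b)" if "C = Or a b" for a b
      using ms3(2)[OF that] by auto
    show "\<exists>m\<in>set (ms1 @ ms2 @ ms3 @ ms4). unboxed_hold S m \<and> \<not> holds m a"
      if "C = Box a" for a
      using ms4(2)[OF that] by auto
  qed
  then show False using irrefutable by blast
qed

end

lemma decided_step:
  assumes IH: "\<And>S' C'. ((S', C'), (S, C)) \<in> search_order \<Longrightarrow> decided S' C'"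
  shows "decided S C"
proof (cases "irreducible S C")
  case True
  then show ?thesis using irreducible_impossible[OF IH] by blast
next
  case False
  then consider (BotL) "Bot \<in># S" | (IdP) p where "C = Var p" "Var p \<in># S"
    | (AndL) a b where "And a b \<in># S" | (OrL) a b where "Or a b \<in># S"
    | (VarImpL) p \<phi> where "Var p \<in># S" "Imp (Var p) \<phi> \<in># S"
    | (AndImpL) a b c where "Imp (And a b) c \<in># S" | (OrImpL) a b c where "Imp (Or a b) c \<in># S"
    | (AndR) a b where "C = And a b" | (ImpR) a b where "C = Imp a b"
    unfolding irreducible_def by blast
  then show ?thesis
  proof cases
    case BotL
    then show ?thesis by (metis G4iSLt.BotL multi_member_split)
  next
    case IdP
    then show ?thesis by (metis G4iSLt.IdP multi_member_split)
  next
    case AndL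
    then show ?thesis using search_AndL[OF IH] by (metis multi_member_split)
  next
    case OrL
    then show ?thesis using search_OrL[OF IH] by (metis multi_member_split)
  next
    case (VarImpL p \<phi>)
    then obtain T1 where T1: "S = add_mset (Var p) T1" by (metis multi_member_split)
    with VarImpL(2) obtain T where "T1 = add_mset (Imp (Var p) \<phi>) T"
      by (metis form.distinct(7) insert_noteq_member multi_member_split)
    with T1 have "S = add_mset (Var p) (add_mset (Imp (Var p) \<phi>) T)" by simp
    then show ?thesis using search_VarImpL[OF IH] by blast
  next
    case AndImpL
    then show ?thesis using search_AndImpL[OF IH] by (metis multi_member_split)
  next
    case OrImpL
    then show ?thesis using search_OrImpL[OF IH] by (metis multi_member_split)
  next
    case AndR
    then show ?thesis using search_AndR[OF IH] by blast
  next
    case ImpR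
    then show ?thesis using search_ImpR[OF IH] by blast
  qed
qed

theorem G4iSLt_complete: "G4iSLt S C \<or> refutable S C"
proof (induction "(S, C)" arbitrary: S C rule: wf_induct[OF wf_search_order])
  case 1
  then show ?case using decided_step by blast
qed

theorem mainTheorem3:
  fixes \<Gamma> :: "form set" and \<phi> :: form
  assumes "iSLH \<Gamma> \<phi>"
  shows "\<exists>\<Gamma>' :: form multiset. set_mset \<Gamma>' \<subseteq> \<Gamma> \<and> G4iSLt \<Gamma>' \<phi>"
proof -
  obtain G where G: "finite G" "G \<subseteq> \<Gamma>" "entails G \<phi>"
    using iSLH_sound[OF assms] by blast
  then have "\<not> refutable (mset_set G) \<phi>"
    unfolding refutable_def entails_def by (simp add: finite_set_mset_mset_set) blast
  then have "G4iSLt (mset_set G) \<phi>" using G4iSLt_complete by blast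
  then show ?thesis using G by (metis finite_set_mset_mset_set)
qed

end
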